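(* Let $\mu$ be a valuated matroid on $[n]$. (i) Let $f=(f_1,f_2):[n]\cup\{o\}\to([n]\cup\{o\})\times\mathbb{T}$ be a map such that for every $i\in[n]$ there is $k\in K$ with $f_2(i)=\mathrm{val}(k)$. Then for the associated weakly monomial matrix $A_f$, $\overline{\operatorname{trop}}(f^{-1}(\mu))=\mathrm{val}(A_f)\odot\overline{\operatorname{trop}}(\mu)$. (ii) Conversely, if $A_f\in K^{n\times n}$ is a weakly monomial matrix, its associated map $f$ satisfies $\overline{\operatorname{trop}}(f^{-1}(\mu))=\mathrm{val}(A_f)\odot\overline{\operatorname{trop}}(\mu)$.
   Context: $K$ is a field with non-Archimedean valuation $\mathrm{val}:K\to\mathbb{T}=\mathbb{R}\cup\{\infty\}$; $(\mathrm{val}(M)\odot v)_i=\min_j(\mathrm{val}(M_{ij})+v_j)$, applied pointwise to sets. Valuated matroid of rank $r$ on finite $E$: $\nu:\binom{E}{r}\to\mathbb{T}$, not identically $\infty$, with exchange property (for all $I,J$, $i\in I\setminus J$ there is $j\in J\setminus I$ with $\nu(I)+\nu(J)\ge\nu((I\setminus i)\cup j)+\nu((J\setminus j)\cup i)$), up to additive constants; $\overline{\operatorname{trop}}(\nu)\subseteq\mathbb{P}(\mathbb{T}^E)$ is the set of $x$ with $\min_e(C_\nu(I)_e+x_e)$ attained at least twice for all $I\in\binom{E}{r+1}$ with $C_\nu(I)\ne(\infty,\dots)$, where $C_\nu(I)_e=\nu(I\setminus e)$ for $e\in I$, $\infty$ else. Pointed matroid $\mu_o$: $\mu$ extended to $[n]\cup\{o\}$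 with $o$ a loop. With $S=f_1([n]\cup\{o\})$, $f^{-1}(\mu)(B)=\mu_o|_S(f_1(B))+\sum_{i\in B}f_2(i)$ where $\mu_o|_S$ is the restriction of $\mu_o$ to $S$ and $|B|$ equals its rank (value $\infty$ if $|f_1(B)|$ too small); $\overline{\operatorname{trop}}(f^{-1}(\mu))$ denotes the projection to the coordinates in $[n]$ of its tropical linear space. Weakly monomial: at most one nonzero entry per row. Associated matrix of $f$: $(A_f)_{ij}=k_i$ if $f_1(i)=j\in[n]$ with $\mathrm{val}(k_i)=f_2(i)$, and $0$ otherwise. Associated map of a weakly monomial $M$: $f(o)=(o,\infty)$; $f(i)=(o,\infty)$ if row $i$ is zero; $f(i)=(j,\mathrm{val}(M_{ij}))$ if $M_{ij}\ne0$. *)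

theory Defs
  imports "HOL-Library.Extended_Real" "HOL-Library.FuncSet"
begin

(* Tropical numbers T = R \<union> {\<infinity>}, represented inside ereal (excluding -\<infinity>). *)
definition tropT :: "ereal set" where
  "tropT = {x. x \<noteq> -\<infinity>}"

definition valuation :: "('k::field \<Rightarrow> ereal) \<Rightarrow> bool" where
  "valuation v \<longleftrightarrow>
     (\<forall>a. v a \<in> tropT) \<and> (\<forall>a. v a = \<infinity> \<longleftrightarrow> a = 0) \<and>
     (\<forall>a b. v (a * b) = v a + v b) \<and> (\<forall>a b. min (v a) (v b) \<le> v (a + b))"

(* Valuated matroid of rank r on the finite ground set E
   (only the values on r-subsets of E matter). *)
definition valuated_matroid :: "'e set \<Rightarrow> nat \<Rightarrow> ('e set \<Rightarrow> ereal) \<Rightarrow> bool" where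
  "valuated_matroid E r \<nu> \<longleftrightarrow>
     finite E \<and>
     (\<forall>B. B \<subseteq> E \<and> card B = r \<longrightarrow> \<nu> B \<in> tropT) \<and>
     (\<exists>B. B \<subseteq> E \<and> card B = r \<and> \<nu> B \<noteq> \<infinity>) \<and>
     (\<forall>I J i. I \<subseteq> E \<and> card I = r \<and> J \<subseteq> E \<and> card J = r \<and> i \<in> I - J \<longrightarrow>
        (\<exists>j \<in> J - I. \<nu> (insert j (I - {i})) + \<nu> (insert i (J - {j})) \<le> \<nu> I + \<nu> J))"

definition circ :: "('e set \<Rightarrow> ereal) \<Rightarrow> 'e set \<Rightarrow> 'e \<Rightarrow> ereal" where
  "circ \<nu> I e = (if e \<in> I then \<nu> (I - {e}) else \<infinity>)"

definition min_twice :: "'e set \<Rightarrow> ('e \<Rightarrow> ereal) \<Rightarrow> bool" where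
  "min_twice E g \<longleftrightarrow>
     (\<exists>e\<in>E. \<exists>e'\<in>E. e \<noteq> e' \<and> g e = g e' \<and> (\<forall>d\<in>E. g e \<le> g d))"

(* Affine cone over the tropical linear space (points x \<in> T^E, extensional on E).
   The projective space P(T^E) corresponds to the non-\<infinity> points modulo R\<one>;
   all sets below are closed under adding real constants. *)
definition trop :: "'e set \<Rightarrow> nat \<Rightarrow> ('e set \<Rightarrow> ereal) \<Rightarrow> ('e \<Rightarrow> ereal) set" where
  "trop E r \<nu> = {x \<in> E \<rightarrow>\<^sub>E tropT.
     \<forall>I. I \<subseteq> E \<and> card I = Suc r \<and> (\<exists>e\<in>E. circ \<nu> I e \<noteq> \<infinity>) \<longrightarrow>
        min_twice E (\<lambda>e. circ \<nu> I e + x e)}"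

definition tmv :: "'e set \<Rightarrow> ('e \<Rightarrow> 'e \<Rightarrow> ereal) \<Rightarrow> ('e \<Rightarrow> ereal) \<Rightarrow> ('e \<Rightarrow> ereal)" where
  "tmv E M v = (\<lambda>i\<in>E. INF j\<in>E. M i j + v j)"

definition rank_of :: "'e set \<Rightarrow> nat \<Rightarrow> ('e set \<Rightarrow> ereal) \<Rightarrow> 'e set \<Rightarrow> nat" where
  "rank_of E r \<nu> S = Max {card A | A. A \<subseteq> S \<and> (\<exists>B. B \<subseteq> E \<and> card B = r \<and> \<nu> B \<noteq> \<infinity> \<and> A \<subseteq> B)}"

(* Restriction (deletion of E - S) of the valuated matroid \<nu>, defined on
   subsets of S of size rank_of E r \<nu> S (well-defined up to an additive constant). *)
definition restr :: "'e set \<Rightarrow> nat \<Rightarrow> ('e set \<Rightarrow> ereal) \<Rightarrow> 'e set \<Rightarrow> 'e set \<Rightarrow> ereal" where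
  "restr E r \<nu> S B =
     (INF J \<in> {J. J \<subseteq> E - S \<and> card J = r - rank_of E r \<nu> S}. \<nu> (B \<union> J))"

(* [n] = {1..n}; the extra point o is 0, so [n] \<union> {o} = {0..n}. *)


(* Pointed matroid \<mu>_o on {0..n}: o is a loop. *)
definition pointed :: "(nat set \<Rightarrow> ereal) \<Rightarrow> nat set \<Rightarrow> ereal" where
  "pointed \<mu> B = (if 0 \<in> B then \<infinity> else \<mu> B)"

definition pb_S :: "nat \<Rightarrow> (nat \<Rightarrow> nat \<times> ereal) \<Rightarrow> nat set" where
  "pb_S n f = fst ` f ` {0..n}"

(* rank of f^{-1}(\<mu>) = rank of \<mu>_o|_S *)
definition pb_rank :: "nat \<Rightarrow> nat \<Rightarrow> (nat set \<Rightarrow> ereal) \<Rightarrow> (nat \<Rightarrow> nat \<times> ereal) \<Rightarrow> nat" where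
  "pb_rank n r \<mu> f = rank_of {0..n} r (pointed \<mu>) (pb_S n f)"

definition pullback :: "nat \<Rightarrow> nat \<Rightarrow> (nat set \<Rightarrow> ereal) \<Rightarrow> (nat \<Rightarrow> nat \<times> ereal) \<Rightarrow> nat set \<Rightarrow> ereal" where
  "pullback n r \<mu> f B =
     (if card ((fst \<circ> f) ` B) < card B then \<infinity>
      else restr {0..n} r (pointed \<mu>) (pb_S n f) ((fst \<circ> f) ` B) + (\<Sum>i\<in>B. snd (f i)))"

(* Associated matrix A_f (any choice of the k_i). *)
definition assoc_matrix :: "('k::field \<Rightarrow> ereal) \<Rightarrow> nat \<Rightarrow> (nat \<Rightarrow> nat \<times> ereal) \<Rightarrow> (nat \<Rightarrow> nat \<Rightarrow> 'k) \<Rightarrow> bool" where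
  "assoc_matrix v n f A \<longleftrightarrow>
     (\<forall>i\<in>{1..n}. \<forall>j\<in>{1..n}.
        (fst (f i) = j \<longrightarrow> v (A i j) = snd (f i)) \<and> (fst (f i) \<noteq> j \<longrightarrow> A i j = 0))"

definition weakly_monomial :: "nat \<Rightarrow> (nat \<Rightarrow> nat \<Rightarrow> 'k::field) \<Rightarrow> bool" where
  "weakly_monomial n M \<longleftrightarrow>
     (\<forall>i\<in>{1..n}. \<forall>j\<in>{1..n}. \<forall>j'\<in>{1..n}. M i j \<noteq> 0 \<and> M i j' \<noteq> 0 \<longrightarrow> j = j')"

definition assoc_map :: "('k::field \<Rightarrow> ereal) \<Rightarrow> nat \<Rightarrow> (nat \<Rightarrow> nat \<Rightarrow> 'k) \<Rightarrow> nat \<Rightarrow> nat \<times> ereal" where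
  "assoc_map v n M i =
     (if i = 0 \<or> (\<forall>j\<in>{1..n}. M i j = 0) then (0, \<infinity>)
      else (let j = (THE j. j \<in> {1..n} \<and> M i j \<noteq> 0) in (j, v (M i j))))"

definition pb_trop :: "nat \<Rightarrow> nat \<Rightarrow> (nat set \<Rightarrow> ereal) \<Rightarrow> (nat \<Rightarrow> nat \<times> ereal) \<Rightarrow> (nat \<Rightarrow> ereal) set" where
  "pb_trop n r \<mu> f = (\<lambda>x. restrict x {1..n}) ` trop {0..n} (pb_rank n r \<mu> f) (pullback n r \<mu> f)"

definition lin_image :: "('k::field \<Rightarrow> ereal) \<Rightarrow> nat \<Rightarrow> (nat \<Rightarrow> nat \<Rightarrow> 'k) \<Rightarrow> nat \<Rightarrow> (nat set \<Rightarrow> ereal) \<Rightarrow> (nat \<Rightarrow> ereal) set" where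
  "lin_image v n A r \<mu> = tmv {1..n} (\<lambda>i j. v (A i j)) ` trop {1..n} r \<mu>"

(* the all-\<infinity> vector on [n], which is not a point of projective space *)
definition inf_vec :: "nat \<Rightarrow> nat \<Rightarrow> ereal" where
  "inf_vec n = (\<lambda>i\<in>{1..n}. \<infinity>)"

end

theory Submission
  imports Defs
begin

text \<open>
  Write \<open>S = f\<^sub>1([n] \<union> {o})\<close> and \<open>\<rho> = \<mu>\<^sub>o|\<^sub>S\<close>, so that
  \<open>f\<^sup>-\<^sup>1(\<mu>)(B) = \<rho>(f\<^sub>1(B)) + (\<Sum>i\<in>B. f\<^sub>2(i))\<close> if \<open>f\<^sub>1\<close> is injective on \<open>B\<close> and \<open>\<infinity>\<close> otherwise.
  A circuit of \<open>f\<^sup>-\<^sup>1(\<mu>)\<close> either contains two elements with the same \<open>f\<^sub>1\<close>-image, and then its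
  circuit vector is finite only at these two entries, which differ by the difference of their
  weights \<open>f\<^sub>2\<close>; or \<open>f\<^sub>1\<close> maps it bijectively onto a circuit of \<open>\<rho>\<close>, and circuit vectors of
  \<open>\<rho>\<close> are pointwise infima of circuit vectors of \<open>\<mu>\<^sub>o\<close>. Hence \<open>x(i) = f\<^sub>2(i) + z(f\<^sub>1(i))\<close>
  (with \<open>z(o) = \<infinity>\<close>) is a tropical point of \<open>f\<^sup>-\<^sup>1(\<mu>)\<close> whenever \<open>z\<close> is one of \<open>\<mu>\<close>.

  Conversely, let \<open>x\<close> be a tropical point of \<open>f\<^sup>-\<^sup>1(\<mu>)\<close>. Coordinates with \<open>f\<^sub>1(i) = o\<close> or
  \<open>f\<^sub>2(i) = \<infinity>\<close> are loops, so \<open>x(i) = \<infinity>\<close> there, and on the other (live) coordinates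
  \<open>x(i) - f\<^sub>2(i)\<close> depends only on \<open>f\<^sub>1(i)\<close>. This defines \<open>z\<close> on the live image, and \<open>z\<close>
  satisfies the circuit conditions of \<open>\<rho>\<close>. To extend \<open>z\<close> to a tropical point of \<open>\<mu>\<close>, fix a
  maximal \<open>\<rho>\<close>-independent set \<open>X\<close> on which \<open>z = \<infinity>\<close>. For each \<open>c\<close> with \<open>z(c)\<close> finite
  choose a \<open>\<rho>\<close>-basis \<open>A \<supseteq> X\<close> through \<open>c\<close> minimising \<open>\<rho>(A) - (\<Sum>a\<in>A - X. z(a))\<close>, extend
  \<open>A - c\<close> to a hyperplane \<open>K\<close> of \<open>\<mu>\<close>, and take the cocircuit of \<open>\<mu>\<close> at \<open>K\<close>, shifted to
  the value \<open>z(c)\<close> at \<open>c\<close>. By the minimality, each of these cocircuits dominates \<open>z\<close> on the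
  live image, so their pointwise minimum is a tropical point of \<open>\<mu>\<close> extending \<open>z\<close>, and \<open>x\<close>
  is its image under \<open>val(A\<^sub>f)\<close>.
\<close>

section \<open>Tropical linear spaces\<close>

lemma finite_INF_attained:
  fixes f :: "'a \<Rightarrow> 'b::complete_linorder"
  assumes "finite A" "A \<noteq> {}"
  shows "\<exists>a\<in>A. (INF x\<in>A. f x) = f a"
proof -
  have "Min (f ` A) \<in> f ` A" using assms by simp
  moreover have "Min (f ` A) = (INF x\<in>A. f x)" using assms by (simp add: Min_Inf)
  ultimately show ?thesis by auto
qed

lemma ereal_add_INF_finite:
  fixes f :: "'a \<Rightarrow> ereal"
  assumes "finite L" "L \<noteq> {}"
  shows "c + (INF l\<in>L. f l) = (INF l\<in>L. c + f l)"
proof -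
  obtain l0 where l0: "l0 \<in> L" "(INF l\<in>L. f l) = f l0"
    using finite_INF_attained[OF assms] by blast
  have "(INF l\<in>L. c + f l) \<le> c + f l0" using l0 by (metis INF_lower)
  moreover have "c + f l0 \<le> (INF l\<in>L. c + f l)"
    using l0 by (intro INF_greatest add_left_mono) (metis INF_lower)
  ultimately show ?thesis using l0 by simp
qed

lemma ereal_add_uminus_cancel: "a + ereal w + ereal (- w) = (a::ereal)"
  by (cases a) auto

lemma tropT_add: "a \<in> tropT \<Longrightarrow> b \<in> tropT \<Longrightarrow> a + b \<in> tropT"
  unfolding tropT_def by (cases a; cases b) auto

lemma tropT_sum: "(\<And>i. i \<in> B \<Longrightarrow> g i \<in> tropT) \<Longrightarrow> sum g B \<in> tropT"
  by (induction B rule: infinite_finite_induct) (auto simp: tropT_def intro: tropT_add)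

lemma card_insert_Diff_swap:
  assumes "finite B" "b \<in> B" "a \<notin> B"
  shows "card (insert a (B - {b})) = card B"
  using assms card_gt_0_iff[of B] by (auto simp: card_Diff_singleton)

lemma two_elements_if_card_ge_2:
  assumes "2 \<le> card I"
  shows "\<exists>a\<in>I. \<exists>b\<in>I. a \<noteq> b"
proof -
  have "finite I" using assms card.infinite by fastforce
  then show ?thesis using assms card_le_Suc0_iff_eq[of I] by auto
qed

lemma min_twice_cong:
  assumes "min_twice E g" "\<And>d. d \<in> E \<Longrightarrow> g d = g' d"
  shows "min_twice E g'"
proof -
  obtain e e' where "e \<in> E" "e' \<in> E" "e \<noteq> e'" "g e = g e'" "\<forall>d\<in>E. g e \<le> g d"
    using assms(1) unfolding min_twice_def by blast
  then show ?thesis unfolding min_twice_def using assms(2)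
    by (intro bexI[of _ e] bexI[of _ e']) auto
qed

lemma min_twice_infinity:
  assumes "\<exists>a\<in>E. \<exists>b\<in>E. a \<noteq> b" "\<And>d. d \<in> E \<Longrightarrow> g d = \<infinity>"
  shows "min_twice E g"
  using assms unfolding min_twice_def by auto

lemma min_twice_add_const:
  assumes "min_twice E g"
  shows "min_twice E (\<lambda>d. g d + ereal c)"
proof -
  obtain e e' where "e \<in> E" "e' \<in> E" "e \<noteq> e'" "g e = g e'" "\<forall>d\<in>E. g e \<le> g d"
    using assms unfolding min_twice_def by blast
  then show ?thesis unfolding min_twice_def
    by (intro bexI[of _ e] bexI[of _ e']) (auto intro: add_right_mono)
qed

lemma min_twice_INF:
  fixes H :: "'l \<Rightarrow> 'e \<Rightarrow> ereal"
  assumes "finite L" "L \<noteq> {}" "finite E" "\<And>l. l \<in> L \<Longrightarrow> min_twice E (H l)"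
  shows "min_twice E (\<lambda>d. INF l\<in>L. H l d)"
proof -
  have "E \<noteq> {}" using assms(2,4) unfolding min_twice_def by blast
  then obtain l0 d0 where l0: "l0 \<in> L" "d0 \<in> E"
    and min: "(INF q\<in>L \<times> E. case_prod H q) = H l0 d0"
    using finite_INF_attained[of "L \<times> E" "case_prod H"] assms(1-3) by fastforce
  define m where "m = H l0 d0"
  have m_le: "m \<le> H l d" if "l \<in> L" "d \<in> E" for l d
    using min that unfolding m_def by (metis INF_lower SigmaI case_prod_conv)
  from assms(4)[OF l0(1)] obtain e e' where ee: "e \<in> E" "e' \<in> E" "e \<noteq> e'"
    "H l0 e = H l0 e'" "\<forall>d\<in>E. H l0 e \<le> H l0 d"
    unfolding min_twice_def by blast
  have "H l0 e = m" using ee(5) m_le[OF l0(1) ee(1)] l0(2) m_def by (metis order_antisym)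
  moreover have "(INF l\<in>L. H l d) = m" if "d \<in> E" "H l0 d = m" for d
    using that l0(1) m_le by (metis INF_greatest INF_lower order_antisym)
  moreover have "\<forall>d\<in>E. m \<le> (INF l\<in>L. H l d)" using m_le by (auto intro: INF_greatest)
  ultimately show ?thesis unfolding min_twice_def using ee
    by (intro bexI[of _ e] bexI[of _ e']) auto
qed

lemma min_twice_insert_infinity:
  assumes "min_twice E g" "g a = \<infinity>"
  shows "min_twice (insert a E) g"
proof -
  obtain e e' where "e \<in> E" "e' \<in> E" "e \<noteq> e'" "g e = g e'" "\<forall>d\<in>E. g e \<le> g d"
    using assms(1) unfolding min_twice_def by blast
  then show ?thesis unfolding min_twice_def using assms(2)
    by (intro bexI[of _ e] bexI[of _ e']) auto
qed

lemma min_twice_pair_iff: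
  assumes "i \<in> E" "i' \<in> E" "i \<noteq> i'" "\<And>d. d \<in> E \<Longrightarrow> d \<noteq> i \<Longrightarrow> d \<noteq> i' \<Longrightarrow> g d = \<infinity>"
  shows "min_twice E g \<longleftrightarrow> g i = g i'"
proof
  assume "min_twice E g"
  then obtain e e' where ee: "e \<in> E" "e' \<in> E" "e \<noteq> e'" "g e = g e'" "\<forall>d\<in>E. g e \<le> g d"
    unfolding min_twice_def by blast
  show "g i = g i'"
  proof (cases "g e = \<infinity>")
    case True
    then have "\<infinity> \<le> g i" "\<infinity> \<le> g i'" using ee(5) assms(1,2) by metis+
    then show ?thesis by simp
  next
    case False
    then have "e \<in> {i, i'}" "e' \<in> {i, i'}" using ee(1,2,4) assms(4) by force+
    then show ?thesis using ee(3,4) by auto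
  qed
next
  assume "g i = g i'"
  moreover have "g i \<le> g d" if "d \<in> E" for d
    using that \<open>g i = g i'\<close> assms(4) by (cases "d = i \<or> d = i'") auto
  ultimately show "min_twice E g" unfolding min_twice_def using assms(1-3) by blast
qed

lemma not_min_twice_if_strict_min:
  assumes "e \<in> E" "\<And>d. d \<in> E \<Longrightarrow> d \<noteq> e \<Longrightarrow> g e < g d"
  shows "\<not> min_twice E g"
proof
  assume "min_twice E g"
  then obtain e1 e2 where "e1 \<in> E" "e2 \<in> E" "e1 \<noteq> e2" "g e1 = g e2" "\<forall>d\<in>E. g e1 \<le> g d"
    unfolding min_twice_def by blast
  then show False using assms by (metis leD)
qed

lemma min_twice_single_support:
  assumes "min_twice E g" "i \<in> E" "\<And>d. d \<in> E \<Longrightarrow> d \<noteq> i \<Longrightarrow> g d = \<infinity>"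
  shows "g i = \<infinity>"
proof -
  obtain e e' where ee: "e \<in> E" "e' \<in> E" "e \<noteq> e'" "g e = g e'" "\<forall>d\<in>E. g e \<le> g d"
    using assms(1) unfolding min_twice_def by blast
  then have "g e = \<infinity>" using assms(3) by metis
  then have "\<infinity> \<le> g i" using ee(5) assms(2) by metis
  then show ?thesis by simp
qed

lemma min_twice_transfer:
  assumes bij: "bij_betw \<tau> I C" and "C \<subseteq> E" "I \<subseteq> E'" "\<exists>a\<in>E'. \<exists>b\<in>E'. a \<noteq> b"
    and G_out: "\<And>d. d \<in> E \<Longrightarrow> d \<notin> C \<Longrightarrow> G d = \<infinity>"
    and V_out: "\<And>e. e \<in> E' \<Longrightarrow> e \<notin> I \<Longrightarrow> V e = \<infinity>"
    and V_G: "\<And>e. e \<in> I \<Longrightarrow> V e = G (\<tau> e) + ereal w"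
    and G: "min_twice E G"
  shows "min_twice E' V"
proof -
  obtain c1 c2 where c: "c1 \<in> E" "c2 \<in> E" "c1 \<noteq> c2" "G c1 = G c2" "\<forall>d\<in>E. G c1 \<le> G d"
    using G unfolding min_twice_def by blast
  show ?thesis
  proof (cases "G c1 = \<infinity>")
    case True
    have "V e = \<infinity>" if "e \<in> E'" for e
    proof (cases "e \<in> I")
      case True
      then have "G (\<tau> e) = \<infinity>"
        using c(5) \<open>G c1 = \<infinity>\<close> bij_betwE[OF bij] assms(2) by (metis subsetD top.extremum_uniqueI top_ereal_def)
      then show ?thesis using V_G[OF True] by simp
    qed (use that V_out in auto)
    then show ?thesis by (rule min_twice_infinity[OF assms(4)])
  next
    case False
    then have "c1 \<in> C" "c2 \<in> C" using c G_out by metis+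
    then obtain e1 e2 where e: "e1 \<in> I" "\<tau> e1 = c1" "e2 \<in> I" "\<tau> e2 = c2"
      using bij unfolding bij_betw_def by blast
    have "V e1 \<le> V d" if "d \<in> E'" for d
    proof (cases "d \<in> I")
      case True
      then have "G c1 + ereal w \<le> G (\<tau> d) + ereal w"
        using c(5) bij_betwE[OF bij] assms(2) by (metis add_right_mono subsetD)
      then show ?thesis using V_G True e by simp
    qed (use that V_out in auto)
    moreover have "V e1 = V e2" using V_G e c(4) by simp
    ultimately show ?thesis unfolding min_twice_def using e c(3) assms(3)
      by (intro bexI[of _ e1] bexI[of _ e2]) auto
  qed
qed

lemma trop_min_twice:
  assumes "x \<in> trop E r \<nu>" "I \<subseteq> E" "card I = Suc r" "\<exists>a\<in>E. \<exists>b\<in>E. a \<noteq> b"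
  shows "min_twice E (\<lambda>e. circ \<nu> I e + x e)"
proof (cases "\<exists>e\<in>E. circ \<nu> I e \<noteq> \<infinity>")
  case True
  then show ?thesis using assms unfolding trop_def by auto
next
  case False
  then show ?thesis using assms(4) by (intro min_twice_infinity) auto
qed

lemma trop_add_const:
  assumes "x \<in> trop E r \<nu>"
  shows "(\<lambda>d\<in>E. ereal c + x d) \<in> trop E r \<nu>"
proof -
  have "(\<lambda>d\<in>E. ereal c + x d) \<in> E \<rightarrow>\<^sub>E tropT"
    using assms unfolding trop_def tropT_def by auto
  moreover have "min_twice E (\<lambda>e. circ \<nu> I e + (\<lambda>d\<in>E. ereal c + x d) e)"
    if "I \<subseteq> E \<and> card I = Suc r \<and> (\<exists>e\<in>E. circ \<nu> I e \<noteq> \<infinity>)" for I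
  proof (rule min_twice_cong)
    show "min_twice E (\<lambda>e. circ \<nu> I e + x e + ereal c)"
      using that assms unfolding trop_def by (auto intro: min_twice_add_const)
  qed (simp add: ac_simps)
  ultimately show ?thesis unfolding trop_def by blast
qed

lemma trop_INF:
  assumes "finite L" "L \<noteq> {}" "finite E" "1 \<le> r" "\<And>l. l \<in> L \<Longrightarrow> v l \<in> trop E r \<nu>"
  shows "(\<lambda>d\<in>E. INF l\<in>L. v l d) \<in> trop E r \<nu>"
proof -
  have "(\<lambda>d\<in>E. INF l\<in>L. v l d) \<in> E \<rightarrow>\<^sub>E tropT"
  proof
    fix d assume "d \<in> E"
    moreover obtain l0 where "l0 \<in> L" "(INF l\<in>L. v l d) = v l0 d"
      using finite_INF_attained[OF assms(1,2)] by blast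
    ultimately show "(\<lambda>d\<in>E. INF l\<in>L. v l d) d \<in> tropT"
      using assms(5) unfolding trop_def by auto
  qed auto
  moreover have "min_twice E (\<lambda>e. circ \<nu> I e + (\<lambda>d\<in>E. INF l\<in>L. v l d) e)"
    if I: "I \<subseteq> E" "card I = Suc r" for I
  proof (rule min_twice_cong)
    have "\<exists>a\<in>E. \<exists>b\<in>E. a \<noteq> b"
      using two_elements_if_card_ge_2[of I] I assms(4) by auto
    then have "min_twice E (\<lambda>e. circ \<nu> I e + v l e)" if "l \<in> L" for l
      using trop_min_twice[OF assms(5)[OF that] I] by blast
    then show "min_twice E (\<lambda>e. INF l\<in>L. circ \<nu> I e + v l e)"
      by (rule min_twice_INF[OF assms(1-3)])
  qed (simp add: ereal_add_INF_finite[OF assms(1,2)])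
  ultimately show ?thesis unfolding trop_def by blast
qed

definition cocircuit :: "'e set \<Rightarrow> ('e set \<Rightarrow> ereal) \<Rightarrow> 'e set \<Rightarrow> 'e \<Rightarrow> ereal" where
  "cocircuit E \<nu> K = (\<lambda>e\<in>E. if e \<in> K then \<infinity> else \<nu> (insert e K))"

lemma cocircuit_min_twice:
  assumes vm: "valuated_matroid E r \<nu>" and r: "1 \<le> r" and K: "K \<subseteq> E" "card K = r - 1"
    and I: "I \<subseteq> E" "card I = Suc r"
  shows "min_twice E (\<lambda>e. circ \<nu> I e + cocircuit E \<nu> K e)"
proof -
  define g where "g e = circ \<nu> I e + cocircuit E \<nu> K e" for e
  have fE: "finite E" using vm unfolding valuated_matroid_def by auto
  have fI: "finite I" using I fE finite_subset by auto
  have card_ins: "card (insert e K) = r" if "e \<notin> K" for e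
    using K fE finite_subset r that by fastforce
  have "E \<noteq> {}" using I by auto
  then obtain e1 where e1: "e1 \<in> E" "(INF e\<in>E. g e) = g e1"
    using finite_INF_attained[OF fE] by blast
  have e1_min: "\<forall>d\<in>E. g e1 \<le> g d" using e1 by (metis INF_lower)
  have "min_twice E g"
  proof (cases "g e1 = \<infinity>")
    case True
    then have "\<forall>d\<in>E. g d = \<infinity>" using e1_min by (metis ereal_infty_less_eq(1))
    then show ?thesis using two_elements_if_card_ge_2[of I] I r by (intro min_twice_infinity) auto
  next
    case False
    then have e1I: "e1 \<in> I" and e1K: "e1 \<notin> K"
      unfolding g_def circ_def cocircuit_def using e1 by (auto split: if_splits)
    have "insert e1 K \<subseteq> E" "I - {e1} \<subseteq> E" "e1 \<in> insert e1 K - (I - {e1})" "card (I - {e1}) = r"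
      using K e1 I e1I fI by auto
    then obtain j where j: "j \<in> (I - {e1}) - insert e1 K"
      "\<nu> (insert j (insert e1 K - {e1})) + \<nu> (insert e1 ((I - {e1}) - {j}))
        \<le> \<nu> (insert e1 K) + \<nu> (I - {e1})"
      using vm card_ins[OF e1K] unfolding valuated_matroid_def by blast
    have "insert e1 K - {e1} = K" "insert e1 ((I - {e1}) - {j}) = I - {j}" using e1K j e1I by auto
    moreover have jE: "j \<in> E" using j I by auto
    moreover have "g e1 = \<nu> (I - {e1}) + \<nu> (insert e1 K)"
      unfolding g_def circ_def cocircuit_def using e1 e1I e1K by simp
    moreover have "g j = \<nu> (I - {j}) + \<nu> (insert j K)"
      unfolding g_def circ_def cocircuit_def using j jE by auto
    ultimately have "g j \<le> g e1" using j(2) by (simp add: ac_simps)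
    then have "g j = g e1" using e1_min jE by (metis order_antisym)
    then show ?thesis unfolding min_twice_def using e1 e1_min jE j
      by (intro bexI[of _ e1] bexI[of _ j]) auto
  qed
  then show ?thesis unfolding g_def .
qed

lemma cocircuit_in_trop:
  assumes vm: "valuated_matroid E r \<nu>" and r: "1 \<le> r" and K: "K \<subseteq> E" "card K = r - 1"
  shows "cocircuit E \<nu> K \<in> trop E r \<nu>"
proof -
  have fK: "finite K" using K vm finite_subset unfolding valuated_matroid_def by auto
  have "cocircuit E \<nu> K e \<in> tropT" if e: "e \<in> E" for e
  proof (cases "e \<in> K")
    case False
    then have "card (insert e K) = r" using fK K r by simp
    then show ?thesis using e K False vm unfolding cocircuit_def valuated_matroid_def by auto
  qed (use e in \<open>simp add: cocircuit_def tropT_def\<close>)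
  then have "cocircuit E \<nu> K \<in> E \<rightarrow>\<^sub>E tropT" by (intro PiE_I) (auto simp: cocircuit_def)
  then show ?thesis unfolding trop_def using cocircuit_min_twice[OF assms] by blast
qed

lemma tmv_single_entry:
  assumes "i \<in> E" "\<And>j. j \<in> E \<Longrightarrow> M i j = (if j = c then a else \<infinity>)"
  shows "tmv E M z i = (if c \<in> E then a + z c else \<infinity>)"
proof -
  have "tmv E M z i = (INF j\<in>E. M i j + z j)" unfolding tmv_def using assms(1) by simp
  also have "\<dots> = (if c \<in> E then a + z c else \<infinity>)"
  proof (rule antisym)
    show "(if c \<in> E then a + z c else \<infinity>) \<le> (INF j\<in>E. M i j + z j)"
      using assms(2) by (intro INF_greatest) auto
    show "(INF j\<in>E. M i j + z j) \<le> (if c \<in> E then a + z c else \<infinity>)"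
      using assms(2) by (auto intro: INF_lower2)
  qed
  finally show ?thesis .
qed

section \<open>Restriction of a valuated matroid\<close>

locale matroid_restriction =
  fixes E :: "'e set" and r :: nat and \<nu> :: "'e set \<Rightarrow> ereal" and S :: "'e set"
  assumes vm: "valuated_matroid E r \<nu>" and S_subset: "S \<subseteq> E"
begin

abbreviation "k \<equiv> rank_of E r \<nu> S"
abbreviation "\<rho> \<equiv> restr E r \<nu> S"
abbreviation "completions \<equiv> {J. J \<subseteq> E - S \<and> card J = r - k}"

lemma finite_E: "finite E"
  using vm unfolding valuated_matroid_def by simp

lemma finite_S: "finite S"
  using S_subset finite_E finite_subset by blast

lemma basis_tropT: "B \<subseteq> E \<Longrightarrow> card B = r \<Longrightarrow> \<nu> B \<in> tropT"
  using vm unfolding valuated_matroid_def by blast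

lemma finite_rank_cards:
  "finite {card A | A. A \<subseteq> S \<and> (\<exists>B. B \<subseteq> E \<and> card B = r \<and> \<nu> B \<noteq> \<infinity> \<and> A \<subseteq> B)}"
proof (rule finite_subset)
  show "finite (card ` Pow S)" using finite_S by simp
qed blast

lemma card_inter_le_rank:
  assumes "B \<subseteq> E" "card B = r" "\<nu> B \<noteq> \<infinity>"
  shows "card (B \<inter> S) \<le> k"
proof -
  have "card (B \<inter> S) \<in> {card A | A. A \<subseteq> S \<and> (\<exists>B. B \<subseteq> E \<and> card B = r \<and> \<nu> B \<noteq> \<infinity> \<and> A \<subseteq> B)}"
    using assms by blast
  then show ?thesis unfolding rank_of_def by (rule Max_ge[OF finite_rank_cards])
qed

lemma rank_witness:
  obtains X B where "X \<subseteq> S" "card X = k" "B \<subseteq> E" "card B = r" "\<nu> B \<noteq> \<infinity>" "X \<subseteq> B"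
proof -
  let ?cards = "{card A | A. A \<subseteq> S \<and> (\<exists>B. B \<subseteq> E \<and> card B = r \<and> \<nu> B \<noteq> \<infinity> \<and> A \<subseteq> B)}"
  obtain B where "B \<subseteq> E" "card B = r" "\<nu> B \<noteq> \<infinity>" using vm unfolding valuated_matroid_def by blast
  then have "card {} \<in> ?cards" by (intro CollectI exI[of _ "{}"]) auto
  then have "Max ?cards \<in> ?cards" using finite_rank_cards by (intro Max_in) auto
  then obtain X B' where X: "Max ?cards = card X" "X \<subseteq> S" "B' \<subseteq> E" "card B' = r" "\<nu> B' \<noteq> \<infinity>" "X \<subseteq> B'"
    by blast
  show ?thesis by (rule that[of X B']) (use X in \<open>simp_all add: rank_of_def\<close>)
qed

lemma rank_le: "k \<le> r"
proof -
  obtain X B where XB: "X \<subseteq> B" "card X = k" "B \<subseteq> E" "card B = r" by (rule rank_witness)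
  have "finite B" using XB(3) finite_E finite_subset by blast
  then show ?thesis using card_mono[OF _ XB(1)] XB(2,4) by simp
qed

lemma finite_completions: "finite completions"
  by (rule finite_subset[of _ "Pow E"]) (auto simp: finite_E)

lemma restr_eq_INF: "\<rho> A = (INF J\<in>completions. \<nu> (A \<union> J))"
  unfolding restr_def by simp

lemma restr_le: "J \<in> completions \<Longrightarrow> \<rho> A \<le> \<nu> (A \<union> J)"
  unfolding restr_eq_INF by (rule INF_lower)

lemma restr_attained:
  assumes "\<rho> A \<noteq> \<infinity>"
  shows "\<exists>J\<in>completions. \<rho> A = \<nu> (A \<union> J)"
proof -
  have "completions \<noteq> {}"
  proof
    assume "completions = {}"
    then have "\<rho> A = \<infinity>" unfolding restr_eq_INF by (simp only: image_empty Inf_empty top_ereal_def)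
    then show False using assms by simp
  qed
  then show ?thesis unfolding restr_eq_INF using finite_INF_attained[OF finite_completions] by blast
qed

lemma completion_union:
  assumes "A \<subseteq> S" "card A = k" "J \<in> completions"
  shows "card (A \<union> J) = r" "A \<union> J \<subseteq> E" "A \<inter> J = {}"
proof -
  have fA: "finite A" using assms finite_S finite_subset by auto
  have fJ: "finite J" using assms finite_E by (auto intro: finite_subset)
  show d: "A \<inter> J = {}" using assms by auto
  show "card (A \<union> J) = r" using card_Un_disjoint[OF fA fJ d] assms rank_le by simp
  show "A \<union> J \<subseteq> E" using assms S_subset by auto
qed

lemma restr_neq_minf:
  assumes "A \<subseteq> S" "card A = k"
  shows "\<rho> A \<noteq> -\<infinity>"
proof (cases "\<rho> A = \<infinity>")
  case False
  then obtain J where "J \<in> completions" "\<rho> A = \<nu> (A \<union> J)" using restr_attained by blast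
  moreover have "\<nu> (A \<union> J) \<in> tropT"
    using completion_union[OF assms \<open>J \<in> completions\<close>] by (intro basis_tropT) auto
  ultimately show ?thesis unfolding tropT_def by simp
qed simp

lemma circ_restr_eq_INF:
  assumes C: "C \<subseteq> S" "card C = Suc k" and ne: "completions \<noteq> {}"
  shows "circ \<rho> C d = (INF J\<in>completions. circ \<nu> (C \<union> J) d)"
proof (cases "d \<in> C")
  case True
  have "circ \<nu> (C \<union> J) d = \<nu> ((C - {d}) \<union> J)" if "J \<in> completions" for J
  proof -
    have "C \<union> J - {d} = (C - {d}) \<union> J" using that C True by auto
    then show ?thesis using True unfolding circ_def by simp
  qed
  then have "(INF J\<in>completions. circ \<nu> (C \<union> J) d) = \<rho> (C - {d})"
    unfolding restr_eq_INF by (rule INF_cong[OF refl])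
  then show ?thesis using True by (simp add: circ_def)
next
  case dC: False
  have fC: "finite C" using C finite_S finite_subset by auto
  have "circ \<nu> (C \<union> J) d = \<infinity>" if J: "J \<in> completions" for J
  proof (cases "d \<in> J")
    case True
    have fJ: "finite J" using J finite_E by (auto intro: finite_subset)
    have "card (C \<union> J) = Suc r"
      using J C card_Un_disjoint[OF fC fJ] rank_le by auto
    then have card_r: "card (C \<union> J - {d}) = r" using True fC fJ by (simp add: card_Diff_singleton)
    have "\<nu> (C \<union> J - {d}) = \<infinity>"
    proof (rule ccontr)
      assume fin: "\<nu> (C \<union> J - {d}) \<noteq> \<infinity>"
      have "C \<union> J - {d} \<subseteq> E" using S_subset J C by auto
      then have "card ((C \<union> J - {d}) \<inter> S) \<le> k" using card_inter_le_rank card_r fin by blast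
      moreover have "card C \<le> card ((C \<union> J - {d}) \<inter> S)"
        using dC C by (intro card_mono) (auto simp: finite_S)
      ultimately show False using C by simp
    qed
    then show ?thesis using True dC unfolding circ_def by simp
  qed (use dC in \<open>simp add: circ_def\<close>)
  then show ?thesis using dC ne by (simp add: circ_def)
qed

lemma restr_trop_min_twice:
  assumes zt: "zt \<in> trop E r \<nu>" and C: "C \<subseteq> S" "card C = Suc k"
    and two: "\<exists>a\<in>E. \<exists>b\<in>E. a \<noteq> b"
  shows "min_twice E (\<lambda>d. circ \<rho> C d + zt d)"
proof (cases "completions = {}")
  case True
  then have "\<rho> A = \<infinity>" for A unfolding restr_eq_INF by (simp only: image_empty Inf_empty top_ereal_def)
  then have "circ \<rho> C d + zt d = \<infinity>" for d by (simp add: circ_def)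
  then show ?thesis using two by (intro min_twice_infinity)
next
  case False
  have fC: "finite C" using C finite_S finite_subset by auto
  have "min_twice E (\<lambda>d. circ \<nu> (C \<union> J) d + zt d)" if J: "J \<in> completions" for J
  proof (rule trop_min_twice[OF zt _ _ two])
    show "C \<union> J \<subseteq> E" using S_subset J C by auto
    show "card (C \<union> J) = Suc r"
      using J C card_Un_disjoint[OF fC, of J] finite_E rank_le by (auto intro: finite_subset)
  qed
  then have "min_twice E (\<lambda>d. INF J\<in>completions. zt d + circ \<nu> (C \<union> J) d)"
    by (intro min_twice_INF[OF finite_completions False]) (simp_all add: finite_E ac_simps)
  then show ?thesis
    by (rule min_twice_cong)
      (simp add: circ_restr_eq_INF[OF C False] ereal_add_INF_finite[OF finite_completions False] ac_simps)
qed

definition rbasis :: "'e set \<Rightarrow> bool" where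
  "rbasis A \<longleftrightarrow> A \<subseteq> S \<and> card A = k \<and> \<rho> A \<noteq> \<infinity>"

definition rindep :: "'e set \<Rightarrow> bool" where
  "rindep X \<longleftrightarrow> (\<exists>A. rbasis A \<and> X \<subseteq> A)"

lemma rbasis_finite: "rbasis A \<Longrightarrow> finite A"
  unfolding rbasis_def using finite_S finite_subset by blast

lemma rbasis_exchange:
  assumes A: "rbasis A" and A': "rbasis A'" and a: "a \<in> A" "a \<notin> A'"
  shows "\<exists>b\<in>A' - A. \<rho> (insert b (A - {a})) \<noteq> \<infinity>"
proof -
  obtain J where J: "J \<in> completions" "\<rho> A = \<nu> (A \<union> J)"
    using restr_attained A unfolding rbasis_def by blast
  obtain J' where J': "J' \<in> completions" "\<rho> A' = \<nu> (A' \<union> J')"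
    using restr_attained A' unfolding rbasis_def by blast
  have AJ: "card (A \<union> J) = r" "A \<union> J \<subseteq> E"
    using completion_union J(1) A unfolding rbasis_def by auto
  have AJ': "card (A' \<union> J') = r" "A' \<union> J' \<subseteq> E"
    using completion_union J'(1) A' unfolding rbasis_def by auto
  have aS: "a \<in> S" using a A unfolding rbasis_def by auto
  have aJ': "a \<notin> J'" using J' aS by auto
  have "a \<in> (A \<union> J) - (A' \<union> J')" using a aJ' by auto
  then obtain j where j: "j \<in> (A' \<union> J') - (A \<union> J)"
    "\<nu> (insert j ((A \<union> J) - {a})) + \<nu> (insert a ((A' \<union> J') - {j})) \<le> \<nu> (A \<union> J) + \<nu> (A' \<union> J')"
    using vm AJ AJ' unfolding valuated_matroid_def by blast
  have "\<nu> (A \<union> J) + \<nu> (A' \<union> J') \<noteq> \<infinity>" using J J' A A' unfolding rbasis_def by simp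
  then have fin: "\<nu> (insert j ((A \<union> J) - {a})) \<noteq> \<infinity>" "\<nu> (insert a ((A' \<union> J') - {j})) \<noteq> \<infinity>"
    using j(2) by (auto simp: ereal_infty_less_eq(1))
  have jA': "j \<in> A'"
  proof (rule ccontr)
    assume jn: "j \<notin> A'"
    define Y where "Y = insert a ((A' \<union> J') - {j})"
    have "finite (A' \<union> J')" using AJ'(2) finite_E finite_subset by blast
    moreover have "j \<in> A' \<union> J'" "a \<notin> A' \<union> J'" using j a aJ' by auto
    ultimately have "card Y = r" unfolding Y_def using card_insert_Diff_swap AJ'(1) by metis
    moreover have "Y \<subseteq> E" unfolding Y_def using AJ' aS S_subset by auto
    ultimately have "card (Y \<inter> S) \<le> k" using card_inter_le_rank fin(2) unfolding Y_def by blast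
    moreover have "card (insert a A') \<le> card (Y \<inter> S)"
      using jn aS A' unfolding Y_def rbasis_def by (intro card_mono) (auto simp: finite_S)
    moreover have "card (insert a A') = Suc k" using a A' rbasis_finite[OF A'] unfolding rbasis_def by simp
    ultimately show False by simp
  qed
  have "insert j (A - {a}) \<union> J = insert j ((A \<union> J) - {a})" using a J aS by auto
  then have "\<rho> (insert j (A - {a})) \<le> \<nu> (insert j ((A \<union> J) - {a}))" using restr_le[OF J(1)] by metis
  then have "\<rho> (insert j (A - {a})) \<noteq> \<infinity>" using fin(1) by (auto simp: ereal_infty_less_eq(1))
  then show ?thesis using jA' j by blast
qed

lemma rbasis_augment:
  assumes "rbasis A1" "X \<subseteq> A1" "rbasis A0"
  shows "\<exists>A. rbasis A \<and> X \<subseteq> A \<and> A \<subseteq> X \<union> A0"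
proof -
  have "\<exists>A'. rbasis A' \<and> X \<subseteq> A' \<and> A' \<subseteq> X \<union> A0"
    if "rbasis A" "X \<subseteq> A" "card (A - (X \<union> A0)) = m" for A m
    using that
  proof (induction m arbitrary: A)
    case 0
    then have "A - (X \<union> A0) = {}" using rbasis_finite by auto
    then show ?case using 0 by blast
  next
    case (Suc m)
    then obtain a where a: "a \<in> A - (X \<union> A0)" by (metis card.empty ex_in_conv nat.distinct(1))
    then obtain b where b: "b \<in> A0 - A" "\<rho> (insert b (A - {a})) \<noteq> \<infinity>"
      using rbasis_exchange[of A A0 a] Suc.prems assms(3) by auto
    have fA: "finite A" using Suc.prems rbasis_finite by blast
    have "rbasis (insert b (A - {a}))"
      using Suc.prems b assms(3) card_insert_Diff_swap[OF fA, of a b] a unfolding rbasis_def by auto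
    moreover have "X \<subseteq> insert b (A - {a})" using Suc.prems a by auto
    moreover have "insert b (A - {a}) - (X \<union> A0) = (A - (X \<union> A0)) - {a}" using b by auto
    then have "card (insert b (A - {a}) - (X \<union> A0)) = m" using Suc.prems a fA by simp
    ultimately show ?case using Suc.IH by blast
  qed
  then show ?thesis using assms(1,2) by blast
qed

lemma rbasis_exists: obtains A where "rbasis A"
proof -
  obtain X B where XB: "X \<subseteq> S" "card X = k" "B \<subseteq> E" "card B = r" "\<nu> B \<noteq> \<infinity>" "X \<subseteq> B"
    by (rule rank_witness)
  have fB: "finite B" using XB(3) finite_E finite_subset by blast
  have sub: "X \<subseteq> B \<inter> S" using XB by auto
  then have "card X \<le> card (B \<inter> S)" using fB by (intro card_mono) auto
  then have "card X = card (B \<inter> S)" using card_inter_le_rank[OF XB(3-5)] XB(2) by simp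
  then have BS: "B \<inter> S = X" using card_subset_eq[OF _ sub] fB by auto
  have "B - X \<in> completions"
    using XB BS fB finite_subset[OF XB(6) fB] by (auto simp: card_Diff_subset)
  moreover have "X \<union> (B - X) = B" using XB by auto
  ultimately have "\<rho> X \<noteq> \<infinity>" using restr_le[of "B - X" X] XB(5) by (auto simp: ereal_infty_less_eq(1))
  then show ?thesis using that XB unfolding rbasis_def by blast
qed

end

section \<open>Pullbacks along maps with weights\<close>

lemma subset_atLeast1_if_zero_notin: "B \<subseteq> {0..n} \<Longrightarrow> 0 \<notin> B \<Longrightarrow> B \<subseteq> {1..(n::nat)}"
  by (auto simp: subset_iff) (metis Suc_leI atLeastAtMost_iff gr0I)+

lemma pointed_zero: "0 \<in> B \<Longrightarrow> pointed \<mu> B = \<infinity>"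
  by (simp add: pointed_def)

lemma valuated_matroid_pointed:
  assumes vm: "valuated_matroid {1..n} r \<mu>"
  shows "valuated_matroid {0..n} r (pointed \<mu>)"
proof -
  have "pointed \<mu> B \<in> tropT" if "B \<subseteq> {0..n}" "card B = r" for B
    using that vm subset_atLeast1_if_zero_notin[of B n]
    unfolding valuated_matroid_def pointed_def tropT_def by auto
  moreover obtain B0 where "B0 \<subseteq> {1..n}" "card B0 = r" "\<mu> B0 \<noteq> \<infinity>"
    using vm unfolding valuated_matroid_def by auto
  then have "\<exists>B. B \<subseteq> {0..n} \<and> card B = r \<and> pointed \<mu> B \<noteq> \<infinity>"
    by (intro exI[of _ B0]) (auto simp: pointed_def)
  moreover have "\<exists>j \<in> J - I. pointed \<mu> (insert j (I - {i})) + pointed \<mu> (insert i (J - {j}))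
      \<le> pointed \<mu> I + pointed \<mu> J"
    if IJ: "I \<subseteq> {0..n}" "card I = r" "J \<subseteq> {0..n}" "card J = r" "i \<in> I - J" for I J i
  proof (cases "0 \<in> I \<or> 0 \<in> J")
    case True
    have "finite I" using IJ finite_subset by auto
    then have "J - I \<noteq> {}" using IJ card_subset_eq[of I J] by auto
    then show ?thesis using True by (auto simp: pointed_def)
  next
    case False
    then have "I \<subseteq> {1..n}" "J \<subseteq> {1..n}" using IJ subset_atLeast1_if_zero_notin by blast+
    then obtain j where j: "j \<in> J - I" "\<mu> (insert j (I - {i})) + \<mu> (insert i (J - {j})) \<le> \<mu> I + \<mu> J"
      using vm IJ unfolding valuated_matroid_def by blast
    moreover have "i \<noteq> 0" using IJ(5) False by (metis DiffD1)
    ultimately have "j \<noteq> 0" "i \<noteq> 0" using False by (metis DiffD1)+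
    then have "0 \<notin> insert j (I - {i})" "0 \<notin> insert i (J - {j})" using False by auto
    then show ?thesis using j False by (intro bexI[of _ j]) (auto simp: pointed_def)
  qed
  ultimately show ?thesis unfolding valuated_matroid_def by auto
qed

lemma two_elements_atLeast0: "1 \<le> n \<Longrightarrow> \<exists>a\<in>{0..n::nat}. \<exists>b\<in>{0..n}. a \<noteq> b"
  by (intro bexI[of _ 0] bexI[of _ 1]) auto

lemma pos_if_restrict_neq_inf_vec: "restrict g {1..n} \<noteq> inf_vec n \<Longrightarrow> 1 \<le> n"
  by (cases n) (auto simp: inf_vec_def)

definition pointed_vec :: "nat \<Rightarrow> (nat \<Rightarrow> ereal) \<Rightarrow> nat \<Rightarrow> ereal" where
  "pointed_vec n z = (\<lambda>e\<in>{0..n}. if e = 0 then \<infinity> else z e)"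

lemma pointed_vec_in_trop:
  assumes z: "z \<in> trop {1..n} r \<mu>" and n: "1 \<le> n"
  shows "pointed_vec n z \<in> trop {0..n} r (pointed \<mu>)"
proof -
  have "pointed_vec n z e \<in> tropT" if "e \<in> {0..n}" for e
  proof (cases "e = 0")
    case False
    then have "e \<in> {1..n}" using that by auto
    then show ?thesis using z False unfolding pointed_vec_def trop_def by auto
  qed (simp add: pointed_vec_def tropT_def)
  then have "pointed_vec n z \<in> {0..n} \<rightarrow>\<^sub>E tropT"
    by (intro PiE_I) (auto simp: pointed_vec_def)
  moreover have "min_twice {0..n} (\<lambda>e. circ (pointed \<mu>) I e + pointed_vec n z e)"
    if I: "I \<subseteq> {0..n}" "card I = Suc r" "\<exists>e\<in>{0..n}. circ (pointed \<mu>) I e \<noteq> \<infinity>" for I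
  proof (cases "0 \<in> I")
    case True
    then have "circ (pointed \<mu>) I e + pointed_vec n z e = \<infinity>" for e
      unfolding circ_def pointed_vec_def by (auto simp: pointed_zero)
    then show ?thesis using two_elements_atLeast0[OF n] by (intro min_twice_infinity)
  next
    case False
    then have I1: "I \<subseteq> {1..n}" using I(1) subset_atLeast1_if_zero_notin by blast
    have circ_eq: "circ (pointed \<mu>) I = circ \<mu> I"
      unfolding circ_def pointed_def using False by auto
    then have "\<exists>e\<in>{1..n}. circ \<mu> I e \<noteq> \<infinity>" using I(3) I1 by (auto simp: circ_def split: if_splits)
    then have "min_twice {1..n} (\<lambda>e. circ \<mu> I e + z e)" using z I1 I(2) unfolding trop_def by blast
    then have "min_twice {1..n} (\<lambda>e. circ (pointed \<mu>) I e + pointed_vec n z e)"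
      by (rule min_twice_cong) (simp add: circ_eq pointed_vec_def)
    then have "min_twice (insert 0 {1..n}) (\<lambda>e. circ (pointed \<mu>) I e + pointed_vec n z e)"
      by (rule min_twice_insert_infinity) (simp add: pointed_vec_def)
    moreover have "insert 0 {1..n} = {0..n}" by auto
    ultimately show ?thesis by simp
  qed
  ultimately show ?thesis unfolding trop_def by blast
qed

locale pullback_data =
  fixes \<mu> :: "nat set \<Rightarrow> ereal" and n r :: nat and f :: "nat \<Rightarrow> nat \<times> ereal"
  assumes vm_\<mu>: "valuated_matroid {1..n} r \<mu>"
    and f_range: "\<And>i. i \<in> {0..n} \<Longrightarrow> fst (f i) \<in> {0..n} \<and> snd (f i) \<in> tropT"
begin

sublocale matroid_restriction "{0..n}" r "pointed \<mu>" "pb_S n f"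
proof
  show "valuated_matroid {0..n} r (pointed \<mu>)" by (rule valuated_matroid_pointed[OF vm_\<mu>])
  show "pb_S n f \<subseteq> {0..n}" using f_range unfolding pb_S_def by blast
qed

abbreviation "S \<equiv> pb_S n f"
abbreviation "\<nu> \<equiv> pullback n r \<mu> f"

lemma pb_rank_eq: "pb_rank n r \<mu> f = k"
  by (simp add: pb_rank_def)

lemma pullback_eq:
  "\<nu> B = (if card ((fst \<circ> f) ` B) < card B then \<infinity> else \<rho> ((fst \<circ> f) ` B) + (\<Sum>i\<in>B. snd (f i)))"
  by (rule pullback_def)

lemma tmv_pullback_matrix:
  assumes "\<And>i j. i \<in> {1..n} \<Longrightarrow> j \<in> {1..n} \<Longrightarrow> M i j = (if fst (f i) = j then snd (f i) else \<infinity>)"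
  shows "tmv {1..n} M z = (\<lambda>i\<in>{1..n}. if fst (f i) = 0 then \<infinity> else snd (f i) + z (fst (f i)))"
proof
  fix i
  show "tmv {1..n} M z i = (\<lambda>i\<in>{1..n}. if fst (f i) = 0 then \<infinity> else snd (f i) + z (fst (f i))) i"
  proof (cases "i \<in> {1..n}")
    case True
    then have "fst (f i) \<in> {1..n} \<longleftrightarrow> fst (f i) \<noteq> 0" using f_range[of i] by auto
    then show ?thesis using tmv_single_entry[of i "{1..n}" M "fst (f i)" "snd (f i)" z] assms True by auto
  next
    case False
    then show ?thesis by (simp only: tmv_def restrict_apply if_False)
  qed
qed

lemma image_subset_S: "B \<subseteq> {0..n} \<Longrightarrow> (fst \<circ> f) ` B \<subseteq> S"
  unfolding pb_S_def by auto

lemma pullback_collision: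
  assumes "finite B" "i \<in> B" "i' \<in> B" "i \<noteq> i'" "fst (f i) = fst (f i')"
  shows "\<nu> B = \<infinity>"
proof -
  have "\<not> inj_on (fst \<circ> f) B" using assms unfolding inj_on_def by auto
  then have "card ((fst \<circ> f) ` B) < card B"
    using inj_on_iff_eq_card[OF assms(1)] card_image_le[OF assms(1)] le_neq_implies_less by blast
  then show ?thesis using pullback_eq by simp
qed

lemma pullback_swap:
  assumes I: "finite I" "i \<in> I" "i' \<in> I" and same: "fst (f i) = fst (f i')"
  shows "\<nu> (I - {i}) + snd (f i) = \<nu> (I - {i'}) + snd (f i')"
proof (cases "i = i'")
  case False
  have img: "(fst \<circ> f) ` (I - {j}) = (fst \<circ> f) ` I" if j: "j \<in> {i, i'}" for j
  proof
    show "(fst \<circ> f) ` I \<subseteq> (fst \<circ> f) ` (I - {j})"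
    proof
      fix c assume "c \<in> (fst \<circ> f) ` I"
      then obtain b where b: "b \<in> I" "c = fst (f b)" by auto
      have "\<exists>b'\<in>I - {j}. fst (f b') = fst (f b)"
      proof (cases "b = j")
        case True
        then show ?thesis using j I same False by (intro bexI[of _ "if j = i then i' else i"]) auto
      qed (use b in auto)
      then obtain b' where "b' \<in> I - {j}" "fst (f b') = fst (f b)" by blast
      then show "c \<in> (fst \<circ> f) ` (I - {j})" using b by (metis comp_apply image_eqI)
    qed
  qed auto
  have card: "card (I - {i}) = card (I - {i'})" using I by simp
  have "(\<Sum>j\<in>I - {l}. snd (f j)) + snd (f l) = (\<Sum>j\<in>I. snd (f j))" if "l \<in> I" for l
    using sum.remove[OF I(1) that, of "\<lambda>j. snd (f j)"] by (simp add: ac_simps)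
  then show ?thesis using I img card unfolding pullback_eq by (simp add: add.assoc)
qed simp

lemma circ_pullback_inj:
  assumes I: "finite I" "inj_on (fst \<circ> f) I" "e \<in> I"
  shows "circ \<nu> I e + snd (f e) = circ \<rho> ((fst \<circ> f) ` I) (fst (f e)) + (\<Sum>i\<in>I. snd (f i))"
proof -
  have "inj_on (fst \<circ> f) (I - {e})" using I(2) by (rule inj_on_subset) auto
  then have "card ((fst \<circ> f) ` (I - {e})) = card (I - {e})" by (rule card_image)
  moreover have "(fst \<circ> f) ` (I - {e}) = (fst \<circ> f) ` I - {fst (f e)}"
    using inj_on_image_set_diff[OF I(2), of I "{e}"] I(3) by auto
  ultimately have "\<nu> (I - {e}) = \<rho> ((fst \<circ> f) ` I - {fst (f e)}) + (\<Sum>i\<in>I - {e}. snd (f i))"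
    using pullback_eq[of "I - {e}"] by simp
  moreover have "(\<Sum>i\<in>I. snd (f i)) = snd (f e) + (\<Sum>i\<in>I - {e}. snd (f i))"
    using sum.remove[OF I(1,3)] by simp
  ultimately show ?thesis using I(3) unfolding circ_def by (simp add: ac_simps)
qed

lemma pullback_neq_minf:
  assumes "B \<subseteq> {0..n}" "card B = k"
  shows "\<nu> B \<noteq> -\<infinity>"
proof (cases "card ((fst \<circ> f) ` B) < card B")
  case False
  have fB: "finite B" using assms finite_subset by auto
  have "card ((fst \<circ> f) ` B) = k" using False card_image_le[OF fB, of "fst \<circ> f"] assms by simp
  then have "\<rho> ((fst \<circ> f) ` B) \<noteq> -\<infinity>" using restr_neq_minf image_subset_S[OF assms(1)] by blast
  moreover have "(\<Sum>i\<in>B. snd (f i)) \<in> tropT" using assms f_range by (intro tropT_sum) auto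
  ultimately show ?thesis using False pullback_eq[of B] by (simp add: tropT_def)
qed (simp add: pullback_eq)

lemma pullback_min_twice_collision:
  assumes I: "I \<subseteq> {0..n}" and e: "e1 \<in> I" "e2 \<in> I" "e1 \<noteq> e2" "fst (f e1) = fst (f e2)"
  shows "min_twice {0..n} (\<lambda>e. circ \<nu> I e + (snd (f e) + w (fst (f e))))"
proof -
  define V where "V e = circ \<nu> I e + (snd (f e) + w (fst (f e)))" for e
  have fI: "finite I" using I finite_subset by auto
  have "min_twice {0..n} V \<longleftrightarrow> V e1 = V e2"
  proof (rule min_twice_pair_iff)
    show "V d = \<infinity>" if "d \<in> {0..n}" "d \<noteq> e1" "d \<noteq> e2" for d
    proof (cases "d \<in> I")
      case True
      then have "\<nu> (I - {d}) = \<infinity>" using pullback_collision[of "I - {d}" e1 e2] fI e that by auto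
      then show ?thesis using True unfolding V_def circ_def by simp
    qed (simp add: V_def circ_def)
  qed (use e I in auto)
  moreover have "V e1 = V e2"
    using e pullback_swap[OF fI e(1,2) e(4)] unfolding V_def circ_def by (simp add: add.assoc[symmetric])
  ultimately show ?thesis unfolding V_def by simp
qed

lemma pullback_min_twice_inj:
  assumes I: "I \<subseteq> {0..n}" "inj_on (fst \<circ> f) I" and n: "1 \<le> n"
    and w: "min_twice {0..n} (\<lambda>d. circ \<rho> ((fst \<circ> f) ` I) d + w d)"
  shows "min_twice {0..n} (\<lambda>e. circ \<nu> I e + (snd (f e) + w (fst (f e))))"
proof -
  define V where "V e = circ \<nu> I e + (snd (f e) + w (fst (f e)))" for e
  define C where "C = (fst \<circ> f) ` I"
  define W where "W = (\<Sum>i\<in>I. snd (f i))"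
  have fI: "finite I" using I finite_subset by auto
  have two: "\<exists>a\<in>{0..n}. \<exists>b\<in>{0..n}. a \<noteq> b" by (rule two_elements_atLeast0[OF n])
  have V_out: "V e = \<infinity>" if "e \<notin> I" for e using that unfolding V_def circ_def by simp
  have V_C: "V e = (circ \<rho> C (fst (f e)) + w (fst (f e))) + W" if "e \<in> I" for e
  proof -
    have "V e = (circ \<rho> C (fst (f e)) + W) + w (fst (f e))"
      using circ_pullback_inj[OF fI I(2) that] unfolding V_def C_def W_def by (simp add: add.assoc[symmetric])
    then show ?thesis by (simp add: ac_simps)
  qed
  have "min_twice {0..n} V"
  proof (cases "W = \<infinity>")
    case True
    then have "V e = \<infinity>" for e using V_C V_out by (cases "e \<in> I") auto
    then show ?thesis using two by (intro min_twice_infinity)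
  next
    case False
    moreover have "W \<in> tropT" unfolding W_def using I f_range by (intro tropT_sum) auto
    ultimately obtain c where c: "W = ereal c" unfolding tropT_def by (cases W) auto
    show ?thesis
    proof (rule min_twice_transfer)
      show "bij_betw (fst \<circ> f) I C" unfolding C_def using I(2) by (rule inj_on_imp_bij_betw)
      show "min_twice {0..n} (\<lambda>d. circ \<rho> C d + w d)" unfolding C_def by (rule w)
      show "V e = circ \<rho> C ((fst \<circ> f) e) + w ((fst \<circ> f) e) + ereal c" if "e \<in> I" for e
        using V_C[OF that] c by simp
    qed (use I f_range two V_out in \<open>auto simp: C_def circ_def\<close>)
  qed
  then show ?thesis unfolding V_def .
qed

definition image_point :: "(nat \<Rightarrow> ereal) \<Rightarrow> nat \<Rightarrow> ereal" where
  "image_point z = (\<lambda>i\<in>{0..n}. snd (f i) + pointed_vec n z (fst (f i)))"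

lemma image_point_in_trop:
  assumes z: "z \<in> trop {1..n} r \<mu>" and n: "1 \<le> n"
  shows "image_point z \<in> trop {0..n} k \<nu>"
proof -
  define zt where "zt = pointed_vec n z"
  have zt: "zt \<in> trop {0..n} r (pointed \<mu>)" unfolding zt_def by (rule pointed_vec_in_trop[OF z n])
  have "image_point z i \<in> tropT" if "i \<in> {0..n}" for i
    using that f_range[OF that] zt unfolding image_point_def zt_def[symmetric] trop_def
    by (auto intro: tropT_add)
  then have "image_point z \<in> {0..n} \<rightarrow>\<^sub>E tropT" by (intro PiE_I) (auto simp: image_point_def)
  moreover have "min_twice {0..n} (\<lambda>e. circ \<nu> I e + image_point z e)"
    if I: "I \<subseteq> {0..n}" "card I = Suc k" for I
  proof (rule min_twice_cong)
    show "min_twice {0..n} (\<lambda>e. circ \<nu> I e + (snd (f e) + zt (fst (f e))))"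
    proof (cases "inj_on (fst \<circ> f) I")
      case True
      have "(fst \<circ> f) ` I \<subseteq> S" "card ((fst \<circ> f) ` I) = Suc k"
        using image_subset_S[OF I(1)] card_image[OF True] I(2) by auto
      then show ?thesis
        using restr_trop_min_twice[OF zt] two_elements_atLeast0[OF n]
        by (intro pullback_min_twice_inj[OF I(1) True n]) blast
    next
      case False
      then show ?thesis using I(1) pullback_min_twice_collision unfolding inj_on_def by auto
    qed
  qed (simp add: image_point_def zt_def)
  ultimately show ?thesis unfolding trop_def by blast
qed

definition loopy :: "nat \<Rightarrow> bool" where
  "loopy i \<longleftrightarrow> (\<forall>B. B \<subseteq> {0..n} \<and> card B = k \<and> i \<in> B \<longrightarrow> \<nu> B = \<infinity>)"

definition live :: "nat \<Rightarrow> bool" where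
  "live i \<longleftrightarrow> i \<in> {0..n} \<and> fst (f i) \<noteq> 0 \<and> snd (f i) \<noteq> \<infinity>"

lemma live_weight_finite: "live i \<Longrightarrow> \<bar>snd (f i)\<bar> \<noteq> \<infinity>"
  using f_range unfolding live_def tropT_def by auto

lemma restr_zero: "0 \<in> A \<Longrightarrow> \<rho> A = \<infinity>"
  unfolding restr_eq_INF by (simp add: pointed_zero top_ereal_def[symmetric])

lemma loopy_if_not_live:
  assumes "i \<in> {0..n}" "\<not> live i"
  shows "loopy i"
  unfolding loopy_def
proof (intro allI impI)
  fix B assume B: "B \<subseteq> {0..n} \<and> card B = k \<and> i \<in> B"
  show "\<nu> B = \<infinity>"
  proof (cases "fst (f i) = 0")
    case True
    then have "0 \<in> (fst \<circ> f) ` B" using B by force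
    then show ?thesis using pullback_eq[of B] restr_zero by simp
  next
    case False
    then have "snd (f i) = \<infinity>" using assms unfolding live_def by auto
    then have "(\<Sum>i\<in>B. snd (f i)) = \<infinity>" using B finite_subset[of B "{0..n}"] sum_Pinfty by auto
    then show ?thesis using pullback_eq[of B] by simp
  qed
qed

lemma loopy_if_same_image:
  assumes "live i" "i' \<in> {0..n}" "fst (f i) = fst (f i')" "loopy i"
  shows "loopy i'"
  unfolding loopy_def
proof (intro allI impI)
  fix B assume B: "B \<subseteq> {0..n} \<and> card B = k \<and> i' \<in> B"
  have fB: "finite B" using B finite_subset by auto
  show "\<nu> B = \<infinity>"
  proof (cases "i \<in> B")
    case True
    show ?thesis
    proof (cases "i = i'")
      case True
      then show ?thesis using assms(4) B unfolding loopy_def by blast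
    next
      case False
      then show ?thesis using pullback_collision[OF fB \<open>i \<in> B\<close>] B assms(3) by blast
    qed
  next
    case False
    define I where "I = insert i B"
    have I: "finite I" "i \<in> I" "i' \<in> I" "I - {i} = B" "I - {i'} = insert i (B - {i'})"
      unfolding I_def using False B fB by auto
    have "insert i (B - {i'}) \<subseteq> {0..n}" "card (insert i (B - {i'})) = k"
      using assms(1) B False card_insert_Diff_swap[OF fB, of i' i] unfolding live_def by auto
    then have "\<nu> (insert i (B - {i'})) = \<infinity>" using assms(4) unfolding loopy_def by blast
    then have "\<nu> B + snd (f i) = \<infinity>" using pullback_swap[OF I(1-3) assms(3)] I(4,5) by simp
    then show ?thesis using live_weight_finite[OF assms(1)] by auto
  qed
qed

lemma pullback_has_basis:
  assumes fin: "\<And>i. i \<in> {0..n} \<Longrightarrow> fst (f i) \<noteq> 0 \<Longrightarrow> snd (f i) \<noteq> \<infinity>"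
  shows "\<exists>B0. B0 \<subseteq> {0..n} \<and> card B0 = k \<and> \<nu> B0 \<noteq> \<infinity>"
proof -
  obtain X where X: "rbasis X" by (rule rbasis_exists)
  then have X0: "0 \<notin> X" using restr_zero unfolding rbasis_def by blast
  define sec where "sec j = (SOME i. i \<in> {0..n} \<and> fst (f i) = j)" for j
  have sec: "sec j \<in> {0..n} \<and> fst (f (sec j)) = j" if "j \<in> X" for j
  proof -
    have "j \<in> S" using that X unfolding rbasis_def by blast
    then have "\<exists>i. i \<in> {0..n} \<and> fst (f i) = j" unfolding pb_S_def by auto
    then show ?thesis unfolding sec_def by (rule someI_ex)
  qed
  define B0 where "B0 = sec ` X"
  have "inj_on sec X" unfolding inj_on_def using sec by metis
  then have card: "card B0 = k" unfolding B0_def using card_image X unfolding rbasis_def by metis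
  have img: "(fst \<circ> f) ` B0 = X" unfolding B0_def using sec by (auto simp: image_iff)
  have "snd (f i) \<noteq> \<infinity>" if "i \<in> B0" for i
    using that sec X0 fin unfolding B0_def by fastforce
  then have "(\<Sum>i\<in>B0. snd (f i)) \<noteq> \<infinity>" by (auto simp: sum_Pinfty)
  then have "\<nu> B0 \<noteq> \<infinity>" using X img card unfolding pullback_eq rbasis_def by simp
  moreover have "B0 \<subseteq> {0..n}" unfolding B0_def using sec by auto
  ultimately show ?thesis using card by blast
qed

end

section \<open>Tropical points of the pullback\<close>

locale pullback_trop_point = pullback_data +
  fixes x :: "nat \<Rightarrow> ereal" and B0 :: "nat set"
  assumes x_trop: "x \<in> trop {0..n} k \<nu>"
    and B0: "B0 \<subseteq> {0..n}" "card B0 = k" "\<nu> B0 \<noteq> \<infinity>"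
    and n_pos: "1 \<le> n"
begin

lemma x_tropT: "i \<in> {0..n} \<Longrightarrow> x i \<in> tropT"
  using x_trop unfolding trop_def by auto

lemma x_min_twice: "I \<subseteq> {0..n} \<Longrightarrow> card I = Suc k \<Longrightarrow> min_twice {0..n} (\<lambda>e. circ \<nu> I e + x e)"
  using trop_min_twice[OF x_trop _ _ two_elements_atLeast0[OF n_pos]] by blast

lemma x_loopy:
  assumes i: "i \<in> {0..n}" "loopy i"
  shows "x i = \<infinity>"
proof -
  have iB: "i \<notin> B0" using B0 i unfolding loopy_def by auto
  define I where "I = insert i B0"
  have fB: "finite B0" using B0 finite_subset by auto
  have I: "I \<subseteq> {0..n}" "card I = Suc k" unfolding I_def using B0 i iB fB by auto
  have "circ \<nu> I i + x i = \<infinity>"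
  proof (rule min_twice_single_support[OF x_min_twice[OF I] i(1)])
    show "circ \<nu> I d + x d = \<infinity>" if d: "d \<in> {0..n}" "d \<noteq> i" for d
    proof (cases "d \<in> I")
      case True
      have "I - {d} \<subseteq> {0..n}" "card (I - {d}) = k" "i \<in> I - {d}"
        using I True d fB by (auto simp: I_def card_Diff_singleton)
      then have "\<nu> (I - {d}) = \<infinity>" using i(2) unfolding loopy_def by blast
      then show ?thesis unfolding circ_def using True by simp
    qed (simp add: circ_def)
  qed
  moreover have "circ \<nu> I i \<noteq> \<infinity>" unfolding circ_def I_def using iB B0 by simp
  ultimately show ?thesis by (cases "x i") auto
qed

lemma x_live_consistent:
  assumes live: "live i" "live i'" and same: "fst (f i) = fst (f i')"
  shows "x i' + snd (f i) = x i + snd (f i')"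
proof (cases "loopy i")
  case True
  then have "loopy i'" using loopy_if_same_image live same unfolding live_def by blast
  then show ?thesis using x_loopy True live unfolding live_def by simp
next
  case False
  then obtain B where B: "B \<subseteq> {0..n}" "card B = k" "i \<in> B" "\<nu> B \<noteq> \<infinity>"
    unfolding loopy_def by blast
  have fB: "finite B" using B finite_subset by auto
  show ?thesis
  proof (cases "i = i'")
    case False
    have i'B: "i' \<notin> B" using pullback_collision[OF fB B(3) _ False same] B(4) by auto
    define I where "I = insert i' B"
    have I: "I \<subseteq> {0..n}" "card I = Suc k" "finite I" "i \<in> I" "i' \<in> I" "I - {i'} = B"
      unfolding I_def using B live i'B fB unfolding live_def by auto
    define V where "V e = circ \<nu> I e + x e" for e
    have "min_twice {0..n} V \<longleftrightarrow> V i = V i'"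
    proof (rule min_twice_pair_iff)
      show "V d = \<infinity>" if "d \<in> {0..n}" "d \<noteq> i" "d \<noteq> i'" for d
      proof (cases "d \<in> I")
        case True
        have "\<nu> (I - {d}) = \<infinity>" using pullback_collision[of "I - {d}" i i'] I that False same by auto
        then show ?thesis using True unfolding V_def circ_def by simp
      qed (simp add: V_def circ_def)
    qed (use I False in auto)
    then have "V i = V i'" using x_min_twice[OF I(1,2)] unfolding V_def by simp
    then have V_eq: "\<nu> (I - {i}) + x i = \<nu> B + x i'" using I unfolding V_def circ_def by simp
    have swap: "\<nu> (I - {i}) + snd (f i) = \<nu> B + snd (f i')"
      using pullback_swap[OF I(3-5) same] I(6) by simp
    have "\<nu> B + (x i' + snd (f i)) = (\<nu> (I - {i}) + x i) + snd (f i)"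
      unfolding V_eq by (simp add: ac_simps)
    also have "\<dots> = (\<nu> (I - {i}) + snd (f i)) + x i" by (simp add: ac_simps)
    also have "\<dots> = \<nu> B + (x i + snd (f i'))" unfolding swap by (simp add: ac_simps)
    finally show ?thesis using ereal_add_cancel_left pullback_neq_minf B by auto
  qed simp
qed

definition live_image :: "nat set" where
  "live_image = (\<lambda>i. fst (f i)) ` Collect live"

definition rep :: "nat \<Rightarrow> nat" where
  "rep c = (SOME i. live i \<and> fst (f i) = c)"

definition z :: "nat \<Rightarrow> ereal" where
  "z c = x (rep c) - snd (f (rep c))"

lemma rep: "c \<in> live_image \<Longrightarrow> live (rep c) \<and> fst (f (rep c)) = c"
  unfolding rep_def live_image_def by (rule someI_ex) auto

lemma live_image_subset: "live_image \<subseteq> {1..n}" "live_image \<subseteq> S"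
proof -
  show "live_image \<subseteq> {1..n}"
    using f_range unfolding live_image_def live_def by fastforce
  show "live_image \<subseteq> S" unfolding live_image_def pb_S_def live_def by auto
qed

lemma finite_live_image: "finite live_image"
  using live_image_subset finite_subset by blast

lemma x_live: "live i \<Longrightarrow> x i = snd (f i) + z (fst (f i))"
proof -
  assume live: "live i"
  define i' where "i' = rep (fst (f i))"
  have "fst (f i) \<in> live_image" unfolding live_image_def using live by auto
  then have live': "live i'" "fst (f i') = fst (f i)" using rep unfolding i'_def by auto
  have "x i + snd (f i') = x i' + snd (f i)" using x_live_consistent[OF live' (1) live] live'(2) by simp
  moreover have "x i \<noteq> -\<infinity>" "x i' \<noteq> -\<infinity>" using x_tropT live live' unfolding live_def tropT_def by auto
  moreover have "\<bar>snd (f i)\<bar> \<noteq> \<infinity>" "\<bar>snd (f i')\<bar> \<noteq> \<infinity>" using live_weight_finite live live' by auto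
  moreover have "z (fst (f i)) = x i' - snd (f i')" unfolding z_def i'_def ..
  ultimately show ?thesis by (cases "x i"; cases "x i'"; cases "snd (f i)"; cases "snd (f i')") auto
qed

lemma z_neq_minf: "c \<in> live_image \<Longrightarrow> z c \<noteq> -\<infinity>"
  using rep[of c] x_tropT live_weight_finite unfolding z_def live_def tropT_def
  by (cases "x (rep c)"; cases "snd (f (rep c))") auto

lemma z_circuit_min_twice:
  assumes C: "C \<subseteq> live_image" "card C = Suc k"
  shows "min_twice {0..n} (\<lambda>d. circ \<rho> C d + z d)"
proof -
  define I where "I = rep ` C"
  have rep_C: "live (rep c)" "fst (f (rep c)) = c" if "c \<in> C" for c using rep that C by auto
  have bij: "bij_betw rep C I" unfolding I_def bij_betw_def inj_on_def using rep_C by metis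
  have fI: "finite I" unfolding I_def using C finite_live_image finite_subset by auto
  have I: "I \<subseteq> {0..n}" "card I = Suc k"
    using rep_C bij_betw_same_card[OF bij] C unfolding I_def live_def by auto
  have img: "(fst \<circ> f) ` I = C" unfolding I_def using rep_C by (auto simp: image_iff)
  have inj: "inj_on (fst \<circ> f) I" unfolding I_def inj_on_def using rep_C by auto
  define W where "W = (\<Sum>i\<in>I. snd (f i))"
  have "W \<in> tropT" unfolding W_def using I f_range by (intro tropT_sum) auto
  moreover have "W \<noteq> \<infinity>"
    unfolding W_def I_def using rep_C unfolding live_def by (auto simp: sum_Pinfty)
  ultimately obtain w where w: "W = ereal w" unfolding tropT_def by (cases W) auto
  show ?thesis
  proof (rule min_twice_transfer)
    show "bij_betw rep C I" by (rule bij)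
    show "min_twice {0..n} (\<lambda>e. circ \<nu> I e + x e)" by (rule x_min_twice[OF I])
    show "circ \<rho> C c + z c = circ \<nu> I (rep c) + x (rep c) + ereal (- w)" if "c \<in> C" for c
    proof -
      have "rep c \<in> I" using that unfolding I_def by simp
      then have eq: "circ \<nu> I (rep c) + x (rep c) = (circ \<rho> C c + z c) + ereal w"
        using circ_pullback_inj[OF fI inj, of "rep c"] x_live[of "rep c"] rep_C[OF that] img
        by (simp add: W_def[symmetric] w[symmetric] ac_simps)
      show ?thesis unfolding eq by (simp add: ereal_add_uminus_cancel)
    qed
  qed (use I C live_image_subset two_elements_atLeast0[OF n_pos] in \<open>auto simp: circ_def\<close>)
qed

definition A_live :: "nat set" where
  "A_live = (fst \<circ> f) ` B0"

lemma A_live: "rbasis A_live" "A_live \<subseteq> live_image"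
proof -
  have fB: "finite B0" using B0 finite_subset by auto
  have nc: "\<not> card ((fst \<circ> f) ` B0) < card B0" using B0(3) pullback_eq[of B0] by auto
  then have "card A_live = k" unfolding A_live_def using card_image_le[OF fB, of "fst \<circ> f"] B0 by simp
  moreover have "\<rho> A_live \<noteq> \<infinity>" using B0(3) pullback_eq[of B0] nc unfolding A_live_def by auto
  ultimately show "rbasis A_live" unfolding rbasis_def A_live_def using image_subset_S[OF B0(1)] by simp
  have "live i" if "i \<in> B0" for i
  proof (rule ccontr)
    assume "\<not> live i"
    then have "loopy i" using loopy_if_not_live B0 that by auto
    then show False using B0 that unfolding loopy_def by auto
  qed
  then show "A_live \<subseteq> live_image" unfolding A_live_def live_image_def by auto
qed

definition Zinf :: "nat set" where
  "Zinf = {c \<in> live_image. z c = \<infinity>}"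

definition Zfin :: "nat set" where
  "Zfin = {c \<in> live_image. z c \<noteq> \<infinity>}"

definition Xmax :: "nat set" where
  "Xmax = (SOME Y. Y \<subseteq> Zinf \<and> rindep Y \<and> (\<forall>Y'. Y' \<subseteq> Zinf \<and> rindep Y' \<longrightarrow> card Y' \<le> card Y))"

lemma Xmax: "Xmax \<subseteq> Zinf" "rindep Xmax" "\<And>d. d \<in> Zinf - Xmax \<Longrightarrow> \<not> rindep (insert d Xmax)"
proof -
  define cards where "cards = {card Y | Y. Y \<subseteq> Zinf \<and> rindep Y}"
  have finZ: "finite Zinf" unfolding Zinf_def using finite_live_image by simp
  have "cards \<subseteq> card ` Pow Zinf" unfolding cards_def by auto
  then have fin: "finite cards" using finZ finite_subset by blast
  have "{} \<subseteq> Zinf \<and> rindep {}" unfolding rindep_def using A_live(1) by blast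
  then have "card {} \<in> cards" unfolding cards_def by (intro CollectI exI[of _ "{}"]) simp
  then have "Max cards \<in> cards" using fin by (intro Max_in) auto
  then obtain Y where Y: "Max cards = card Y" "Y \<subseteq> Zinf" "rindep Y" unfolding cards_def by auto
  have "\<forall>Y'. Y' \<subseteq> Zinf \<and> rindep Y' \<longrightarrow> card Y' \<le> card Y"
  proof (intro allI impI)
    fix Y' assume "Y' \<subseteq> Zinf \<and> rindep Y'"
    then have "card Y' \<in> cards" unfolding cards_def by blast
    then show "card Y' \<le> card Y" using Y(1) fin by (metis Max_ge)
  qed
  then have "\<exists>Y. Y \<subseteq> Zinf \<and> rindep Y \<and> (\<forall>Y'. Y' \<subseteq> Zinf \<and> rindep Y' \<longrightarrow> card Y' \<le> card Y)"
    using Y by blast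
  then have X: "Xmax \<subseteq> Zinf \<and> rindep Xmax \<and> (\<forall>Y'. Y' \<subseteq> Zinf \<and> rindep Y' \<longrightarrow> card Y' \<le> card Xmax)"
    unfolding Xmax_def by (rule someI_ex)
  then show "Xmax \<subseteq> Zinf" "rindep Xmax" by auto
  show "\<not> rindep (insert d Xmax)" if "d \<in> Zinf - Xmax" for d
  proof
    assume "rindep (insert d Xmax)"
    then have "card (insert d Xmax) \<le> card Xmax" using X that by auto
    moreover have "finite Xmax" using X finZ finite_subset by blast
    ultimately show False using that by simp
  qed
qed

lemma Xmax_subset: "Xmax \<subseteq> live_image" "Xmax \<inter> Zfin = {}" "\<And>c. c \<in> Xmax \<Longrightarrow> z c = \<infinity>"
  using Xmax(1) unfolding Zinf_def Zfin_def by auto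

definition adapted :: "nat set set" where
  "adapted = {A. Xmax \<subseteq> A \<and> A \<subseteq> live_image \<and> card A = k \<and> A - Xmax \<subseteq> Zfin \<and> \<rho> A \<noteq> \<infinity>}"

lemma adapted_rbasis: "A \<in> adapted \<Longrightarrow> rbasis A"
  unfolding adapted_def rbasis_def using live_image_subset by auto

lemma finite_adapted: "finite adapted"
  by (rule finite_subset[of _ "Pow live_image"]) (auto simp: adapted_def finite_live_image)

lemma adapted_nonempty: "adapted \<noteq> {}"
proof -
  obtain A1 where "rbasis A1" "Xmax \<subseteq> A1" using Xmax(2) unfolding rindep_def by blast
  then obtain A where A: "rbasis A" "Xmax \<subseteq> A" "A \<subseteq> Xmax \<union> A_live"
    using rbasis_augment A_live(1) by blast
  have A_sub: "A \<subseteq> live_image" using A Xmax_subset(1) A_live(2) by auto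
  have "a \<in> Zfin" if a: "a \<in> A - Xmax" for a
  proof (rule ccontr)
    assume "a \<notin> Zfin"
    then have "a \<in> Zinf - Xmax" using a A_sub unfolding Zinf_def Zfin_def by auto
    moreover have "rindep (insert a Xmax)" unfolding rindep_def using A a by auto
    ultimately show False using Xmax(3) by blast
  qed
  then have "A \<in> adapted" unfolding adapted_def using A A_sub unfolding rbasis_def by auto
  then show ?thesis by auto
qed

definition rho_real :: "nat set \<Rightarrow> real" where
  "rho_real A = real_of_ereal (\<rho> A)"

definition z_real :: "nat \<Rightarrow> real" where
  "z_real c = real_of_ereal (z c)"

definition weight :: "nat set \<Rightarrow> real" where
  "weight A = rho_real A - (\<Sum>a\<in>A - Xmax. z_real a)"

lemma rho_real: "rbasis A \<Longrightarrow> \<rho> A = ereal (rho_real A)"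
  using restr_neq_minf unfolding rbasis_def rho_real_def by (cases "\<rho> A") auto

lemma z_real: "c \<in> Zfin \<Longrightarrow> z c = ereal (z_real c)"
  using z_neq_minf unfolding Zfin_def z_real_def by (cases "z c") auto

lemma weight_swap:
  assumes A: "A \<in> adapted" and a: "a \<in> A" "a \<notin> Xmax" and b: "b \<notin> A" "b \<in> Zfin"
  shows "weight (insert b (A - {a})) = weight A + rho_real (insert b (A - {a})) - rho_real A - z_real b + z_real a"
proof -
  have fA: "finite A" using rbasis_finite[OF adapted_rbasis[OF A]] .
  have "b \<notin> Xmax" using Xmax_subset(2) b by auto
  then have "insert b (A - {a}) - Xmax = insert b ((A - Xmax) - {a})" by auto
  then have "(\<Sum>c\<in>insert b (A - {a}) - Xmax. z_real c) = z_real b + (\<Sum>c\<in>(A - Xmax) - {a}. z_real c)"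
    using fA b by simp
  moreover have "(\<Sum>c\<in>A - Xmax. z_real c) = z_real a + (\<Sum>c\<in>(A - Xmax) - {a}. z_real c)"
    using sum.remove[of "A - Xmax" a z_real] fA a by simp
  ultimately show ?thesis unfolding weight_def by simp
qed

lemma adapted_swap:
  assumes A: "A \<in> adapted" and a: "a \<in> A" "a \<notin> Xmax" and b: "b \<notin> A" "b \<in> Zfin"
    and fin: "\<rho> (insert b (A - {a})) \<noteq> \<infinity>"
  shows "insert b (A - {a}) \<in> adapted"
proof -
  have "finite A" using rbasis_finite[OF adapted_rbasis[OF A]] .
  then have "card (insert b (A - {a})) = k" using card_insert_Diff_swap[of A a b] a(1) b(1) A unfolding adapted_def by simp
  then show ?thesis using A a b fin unfolding adapted_def Zfin_def by auto
qed

lemma adapted_circuit_entry: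
  assumes As: "As \<in> adapted" and e: "e \<in> Zfin" "e \<notin> As" and d: "d \<noteq> e"
    and fin: "circ \<rho> (insert e As) d + z d \<noteq> \<infinity>"
  shows "insert e (As - {d}) \<in> adapted"
    and "circ \<rho> (insert e As) d + z d
      = circ \<rho> (insert e As) e + z e + ereal (weight (insert e (As - {d})) - weight As)"
proof -
  define A2 where "A2 = insert e (As - {d})"
  have "insert e As - {d} = A2" "insert e As - {e} = As" unfolding A2_def using d e by auto
  then have dAs: "d \<in> As" and fin2: "\<rho> A2 \<noteq> \<infinity>" "z d \<noteq> \<infinity>"
    using fin d unfolding circ_def by (auto split: if_splits)
  then have dX: "d \<notin> Xmax" using Xmax_subset(3) by auto
  have dZ: "d \<in> Zfin" using As dAs dX unfolding adapted_def by auto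
  show A2: "insert e (As - {d}) \<in> adapted"
    using fin2(1) unfolding A2_def by (intro adapted_swap[OF As dAs dX e(2,1)])
  have "weight A2 = weight As + rho_real A2 - rho_real As - z_real e + z_real d"
    unfolding A2_def by (rule weight_swap[OF As dAs dX e(2,1)])
  moreover have "circ \<rho> (insert e As) d = ereal (rho_real A2)"
    using dAs \<open>insert e As - {d} = A2\<close> rho_real[OF adapted_rbasis[OF A2[folded A2_def]]]
    unfolding circ_def by simp
  moreover have "circ \<rho> (insert e As) e = ereal (rho_real As)"
    using \<open>insert e As - {e} = As\<close> rho_real[OF adapted_rbasis[OF As]] unfolding circ_def by simp
  ultimately show "circ \<rho> (insert e As) d + z d
      = circ \<rho> (insert e As) e + z e + ereal (weight (insert e (As - {d})) - weight As)"
    using z_real[OF e(1)] z_real[OF dZ] unfolding A2_def by simp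
qed

text \<open>If no weight-minimal adapted basis contained \<open>e\<close>, the circuit of \<open>\<rho>\<close> through \<open>e\<close> and a
  weight-minimal adapted basis would take its minimum with \<open>z\<close> only at \<open>e\<close>.\<close>

lemma weight_min_through:
  assumes e: "e \<in> Zfin"
  shows "\<exists>A\<in>adapted. e \<in> A \<and> (\<forall>A'\<in>adapted. weight A \<le> weight A')"
proof (rule ccontr)
  assume no_min: "\<not> ?thesis"
  have "Min (weight ` adapted) \<in> weight ` adapted" using finite_adapted adapted_nonempty by simp
  then obtain As where As: "As \<in> adapted" "weight As = Min (weight ` adapted)" by auto
  have As_min: "\<forall>A'\<in>adapted. weight As \<le> weight A'" using As finite_adapted by simp
  have eAs: "e \<notin> As" using no_min As As_min by blast
  define C where "C = insert e As"
  have fAs: "finite As" using rbasis_finite[OF adapted_rbasis[OF As(1)]] .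
  have C: "C \<subseteq> live_image" "card C = Suc k"
    unfolding C_def using As e eAs fAs unfolding adapted_def Zfin_def by auto
  have "C - {e} = As" unfolding C_def using eAs by auto
  then have g: "circ \<rho> C e + z e = ereal (rho_real As + z_real e)"
    using rho_real[OF adapted_rbasis[OF As(1)]] z_real[OF e] unfolding C_def circ_def by simp
  have strict: "circ \<rho> C e + z e < circ \<rho> C d + z d" if d: "d \<in> {0..n}" "d \<noteq> e" for d
  proof (cases "circ \<rho> C d + z d = \<infinity>")
    case False
    note entry = adapted_circuit_entry[OF As(1) e eAs d(2) False[unfolded C_def]]
    then obtain A' where "A' \<in> adapted" "weight A' < weight (insert e (As - {d}))"
      using no_min by force
    then have "weight As < weight (insert e (As - {d}))" using As_min by force
    then show ?thesis using entry(2) g unfolding C_def by simp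
  next
    case True
    have "circ \<rho> C e + z e < \<infinity>" using g by simp
    then show ?thesis unfolding True .
  qed
  have "e \<in> {0..n}" using e live_image_subset unfolding Zfin_def by auto
  then have "\<not> min_twice {0..n} (\<lambda>d. circ \<rho> C d + z d)"
    using strict by (rule not_min_twice_if_strict_min)
  then show False using z_circuit_min_twice[OF C] by contradiction
qed

definition Amin :: "nat \<Rightarrow> nat set" where
  "Amin e = (SOME A. A \<in> adapted \<and> e \<in> A \<and> (\<forall>A'\<in>adapted. weight A \<le> weight A'))"

definition Jmin :: "nat \<Rightarrow> nat set" where
  "Jmin e = (SOME J. J \<in> completions \<and> \<rho> (Amin e) = pointed \<mu> (Amin e \<union> J))"

definition Kmin :: "nat \<Rightarrow> nat set" where
  "Kmin e = (Amin e - {e}) \<union> Jmin e"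

definition ext_vec :: "nat \<Rightarrow> nat \<Rightarrow> ereal" where
  "ext_vec e = (\<lambda>d\<in>{1..n}. ereal (z_real e - rho_real (Amin e)) + cocircuit {1..n} \<mu> (Kmin e) d)"

definition z_ext :: "nat \<Rightarrow> ereal" where
  "z_ext = (\<lambda>d\<in>{1..n}. INF e\<in>Zfin. ext_vec e d)"

lemma Amin: "e \<in> Zfin \<Longrightarrow> Amin e \<in> adapted \<and> e \<in> Amin e \<and> (\<forall>A'\<in>adapted. weight (Amin e) \<le> weight A')"
  unfolding Amin_def by (rule someI_ex) (use weight_min_through in blast)

lemma Jmin:
  assumes "e \<in> Zfin"
  shows "Jmin e \<in> completions \<and> \<rho> (Amin e) = pointed \<mu> (Amin e \<union> Jmin e)"
proof -
  have "\<rho> (Amin e) \<noteq> \<infinity>" using Amin[OF assms] unfolding adapted_def by auto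
  then have "\<exists>J. J \<in> completions \<and> \<rho> (Amin e) = pointed \<mu> (Amin e \<union> J)" using restr_attained by blast
  then show ?thesis unfolding Jmin_def by (rule someI_ex)
qed

lemma rank_pos:
  assumes "e \<in> Zfin"
  shows "1 \<le> k"
proof -
  have A: "Amin e \<in> adapted" "e \<in> Amin e" using Amin[OF assms] by auto
  then have "0 < card (Amin e)" using rbasis_finite[OF adapted_rbasis[OF A(1)]] card_gt_0_iff by blast
  then show ?thesis using A(1) unfolding adapted_def by simp
qed

lemma Kmin:
  assumes e: "e \<in> Zfin"
  shows "Kmin e \<subseteq> {1..n}" "card (Kmin e) = r - 1" "e \<notin> Kmin e"
    "insert e (Kmin e) = Amin e \<union> Jmin e" "0 \<notin> Amin e \<union> Jmin e"
proof -
  have A: "Amin e \<in> adapted" "e \<in> Amin e" using Amin[OF e] by auto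
  have J: "Jmin e \<in> completions" "\<rho> (Amin e) = pointed \<mu> (Amin e \<union> Jmin e)" using Jmin[OF e] by auto
  have "\<rho> (Amin e) \<noteq> \<infinity>" using A unfolding adapted_def by auto
  then show zero: "0 \<notin> Amin e \<union> Jmin e" using J(2) pointed_zero by metis
  have AS: "Amin e \<subseteq> live_image" "Amin e \<subseteq> S" using A live_image_subset unfolding adapted_def by auto
  have "Jmin e \<subseteq> {0..n}" using J by auto
  then have "Jmin e \<subseteq> {1..n}" using zero subset_atLeast1_if_zero_notin by blast
  then show "Kmin e \<subseteq> {1..n}" unfolding Kmin_def using AS live_image_subset by auto
  have disj: "(Amin e - {e}) \<inter> Jmin e = {}" using J AS by auto
  have fA: "finite (Amin e)" using rbasis_finite[OF adapted_rbasis[OF A(1)]] .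
  have fJ: "finite (Jmin e)" using J finite_subset by auto
  have "card (Amin e - {e}) = k - 1" using A fA unfolding adapted_def by (simp add: card_Diff_singleton)
  moreover have "card (Jmin e) = r - k" using J by simp
  ultimately show "card (Kmin e) = r - 1"
    unfolding Kmin_def using card_Un_disjoint[OF _ fJ disj] fA rank_pos[OF e] rank_le by simp
  show "e \<notin> Kmin e" unfolding Kmin_def using J AS A by auto
  show "insert e (Kmin e) = Amin e \<union> Jmin e" unfolding Kmin_def using A by auto
qed

lemma ext_vec_in_trop:
  assumes "e \<in> Zfin"
  shows "ext_vec e \<in> trop {1..n} r \<mu>"
proof -
  have "1 \<le> r" using rank_pos[OF assms] rank_le by simp
  then show ?thesis unfolding ext_vec_def
    by (intro trop_add_const cocircuit_in_trop[OF vm_\<mu>] Kmin[OF assms])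
qed

lemma z_ext_in_trop:
  assumes "Zfin \<noteq> {}"
  shows "z_ext \<in> trop {1..n} r \<mu>"
proof -
  have "1 \<le> r" using assms rank_pos rank_le by fastforce
  moreover have "finite Zfin" using finite_live_image unfolding Zfin_def by simp
  ultimately show ?thesis unfolding z_ext_def using assms ext_vec_in_trop by (intro trop_INF) auto
qed

lemma ext_vec_eq:
  assumes e: "e \<in> Zfin" and d: "d \<in> {1..n}" "d \<notin> Kmin e"
  shows "ext_vec e d = ereal (z_real e - rho_real (Amin e)) + pointed \<mu> (insert d (Kmin e))"
  using d Kmin[OF e] unfolding ext_vec_def cocircuit_def pointed_def by auto

lemma ext_vec_diag:
  assumes e: "e \<in> Zfin"
  shows "ext_vec e e = z e"
proof -
  have "e \<in> {1..n}" using e live_image_subset unfolding Zfin_def by auto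
  then have "ext_vec e e = ereal (z_real e - rho_real (Amin e)) + \<rho> (Amin e)"
    using ext_vec_eq[OF e] Kmin[OF e] Jmin[OF e] by simp
  then show ?thesis using rho_real[OF adapted_rbasis] Amin[OF e] z_real[OF e] by simp
qed

lemma ext_vec_ge_swap:
  assumes e: "e \<in> Zfin" and d: "d \<in> {1..n}" "d \<notin> Amin e"
  shows "ereal (z_real e - rho_real (Amin e)) + \<rho> (insert d (Amin e - {e})) \<le> ext_vec e d"
proof (cases "d \<in> Kmin e")
  case True
  then show ?thesis unfolding ext_vec_def cocircuit_def using d by simp
next
  case False
  have "\<rho> (insert d (Amin e - {e})) \<le> pointed \<mu> (insert d (Amin e - {e}) \<union> Jmin e)"
    using restr_le Jmin[OF e] by blast
  moreover have "insert d (Amin e - {e}) \<union> Jmin e = insert d (Kmin e)" unfolding Kmin_def by auto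
  ultimately show ?thesis using ext_vec_eq[OF e d(1) False] by (metis add_left_mono)
qed

lemma z_le_swap:
  assumes e: "e \<in> Zfin" and d: "d \<in> live_image" "d \<notin> Amin e"
  shows "z d \<le> ereal (z_real e - rho_real (Amin e)) + \<rho> (insert d (Amin e - {e}))"
proof -
  define A2 where "A2 = insert d (Amin e - {e})"
  have A: "Amin e \<in> adapted" "e \<in> Amin e" "\<forall>A'\<in>adapted. weight (Amin e) \<le> weight A'"
    using Amin[OF e] by auto
  have eX: "e \<notin> Xmax" using Xmax_subset(2) e by auto
  show ?thesis
  proof (cases "\<rho> A2 = \<infinity>")
    case fin: False
    show ?thesis
    proof (cases "d \<in> Zfin")
      case False
      have "rbasis A2" unfolding A2_def
        using adapted_rbasis[OF A(1)] d live_image_subset fin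
          card_insert_Diff_swap[OF rbasis_finite[OF adapted_rbasis[OF A(1)]] A(2) d(2)]
        unfolding rbasis_def A2_def by auto
      moreover have "insert d Xmax \<subseteq> A2" unfolding A2_def using A eX unfolding adapted_def by auto
      moreover have "d \<in> Zinf - Xmax" using False d A unfolding Zinf_def Zfin_def adapted_def by auto
      ultimately show ?thesis using Xmax(3) unfolding rindep_def by blast
    next
      case True
      have A2: "A2 \<in> adapted"
        unfolding A2_def using fin A2_def by (intro adapted_swap[OF A(1,2) eX d(2) True]) simp
      have "weight A2 = weight (Amin e) + rho_real A2 - rho_real (Amin e) - z_real d + z_real e"
        unfolding A2_def by (rule weight_swap[OF A(1,2) eX d(2) True])
      moreover have "weight (Amin e) \<le> weight A2" using A(3) A2 by blast
      ultimately show ?thesis using z_real[OF True] rho_real[OF adapted_rbasis[OF A2]] by (simp add: A2_def)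
    qed
  qed (simp add: A2_def)
qed

lemma z_le_ext_vec:
  assumes e: "e \<in> Zfin" and d: "d \<in> live_image"
  shows "z d \<le> ext_vec e d"
proof -
  have dn: "d \<in> {1..n}" using d live_image_subset by auto
  consider "d = e" | "d \<in> Amin e - {e}" | "d \<notin> Amin e" by blast
  then show ?thesis
  proof cases
    case 1
    then show ?thesis using ext_vec_diag[OF e] by simp
  next
    case 2
    then show ?thesis unfolding ext_vec_def cocircuit_def Kmin_def using dn by simp
  next
    case 3
    then show ?thesis using z_le_swap[OF e d] ext_vec_ge_swap[OF e dn] by (metis order_trans)
  qed
qed

lemma z_ext_eq:
  assumes d: "d \<in> live_image"
  shows "z_ext d = z d"
proof -
  have dn: "d \<in> {1..n}" using d live_image_subset by auto
  have ge: "z d \<le> z_ext d" unfolding z_ext_def using dn z_le_ext_vec d by (auto intro: INF_greatest)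
  show ?thesis
  proof (cases "d \<in> Zfin")
    case True
    have "z_ext d \<le> ext_vec d d" unfolding z_ext_def using dn True by (auto intro: INF_lower)
    then show ?thesis using ext_vec_diag[OF True] ge by simp
  next
    case False
    then show ?thesis using d ge unfolding Zfin_def by simp
  qed
qed

lemma restrict_x_in_image:
  assumes ne: "restrict x {1..n} \<noteq> inf_vec n"
    and M: "\<And>i j. i \<in> {1..n} \<Longrightarrow> j \<in> {1..n} \<Longrightarrow> M i j = (if fst (f i) = j then snd (f i) else \<infinity>)"
  shows "restrict x {1..n} \<in> tmv {1..n} M ` trop {1..n} r \<mu>"
proof -
  obtain i0 where i0: "i0 \<in> {1..n}" "x i0 \<noteq> \<infinity>"
    using ne unfolding inf_vec_def by (metis restrict_ext)
  have x_inf: "x i = \<infinity>" if "i \<in> {0..n}" "\<not> live i" for i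
    using x_loopy loopy_if_not_live that by blast
  then have "live i0" using i0 by auto
  then have "fst (f i0) \<in> Zfin"
    using x_live i0(2) unfolding Zfin_def live_image_def by auto
  then have "z_ext \<in> trop {1..n} r \<mu>" using z_ext_in_trop by blast
  moreover have "tmv {1..n} M z_ext = restrict x {1..n}"
  proof -
    have "(if fst (f i) = 0 then \<infinity> else snd (f i) + z_ext (fst (f i))) = x i" if i: "i \<in> {1..n}" for i
    proof (cases "live i")
      case True
      then have "fst (f i) \<in> live_image" unfolding live_image_def by auto
      then show ?thesis using z_ext_eq x_live True unfolding live_def by auto
    next
      case False
      then show ?thesis using x_inf i unfolding live_def by auto
    qed
    then have "(\<lambda>i\<in>{1..n}. if fst (f i) = 0 then \<infinity> else snd (f i) + z_ext (fst (f i))) = restrict x {1..n}"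
      by (intro restrict_ext) auto
    then show ?thesis using tmv_pullback_matrix[OF M, of z_ext] by simp
  qed
  ultimately show ?thesis by (metis image_eqI)
qed

end

context pullback_data
begin

lemma pb_trop_eq_image:
  assumes M: "\<And>i j. i \<in> {1..n} \<Longrightarrow> j \<in> {1..n} \<Longrightarrow> M i j = (if fst (f i) = j then snd (f i) else \<infinity>)"
    and B0: "\<exists>B0. B0 \<subseteq> {0..n} \<and> card B0 = k \<and> \<nu> B0 \<noteq> \<infinity>"
  shows "pb_trop n r \<mu> f - {inf_vec n} = tmv {1..n} M ` trop {1..n} r \<mu> - {inf_vec n}"
proof (intro equalityI subsetI)
  fix y assume y: "y \<in> pb_trop n r \<mu> f - {inf_vec n}"
  then obtain x where x: "x \<in> trop {0..n} k \<nu>" "y = restrict x {1..n}"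
    unfolding pb_trop_def pb_rank_eq by auto
  have n: "1 \<le> n" using y x(2) pos_if_restrict_neq_inf_vec by blast
  obtain B where "B \<subseteq> {0..n}" "card B = k" "\<nu> B \<noteq> \<infinity>" using B0 by blast
  then interpret pullback_trop_point \<mu> n r f x B
    by unfold_locales (use x(1) n in auto)
  show "y \<in> tmv {1..n} M ` trop {1..n} r \<mu> - {inf_vec n}"
    using restrict_x_in_image[OF _ M] y x(2) by blast
next
  fix y assume y: "y \<in> tmv {1..n} M ` trop {1..n} r \<mu> - {inf_vec n}"
  then obtain z where z: "z \<in> trop {1..n} r \<mu>" "y = tmv {1..n} M z" by auto
  have "1 \<le> n" using y z(2) pos_if_restrict_neq_inf_vec unfolding tmv_def by blast
  then have "image_point z \<in> trop {0..n} k \<nu>" by (rule image_point_in_trop[OF z(1)])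
  moreover have "y = restrict (image_point z) {1..n}"
  proof -
    have "y = (\<lambda>i\<in>{1..n}. if fst (f i) = 0 then \<infinity> else snd (f i) + z (fst (f i)))"
      unfolding z(2) by (rule tmv_pullback_matrix[OF M])
    also have "\<dots> = restrict (image_point z) {1..n}"
      unfolding image_point_def pointed_vec_def using f_range by (intro restrict_ext) auto
    finally show ?thesis .
  qed
  ultimately have "y \<in> pb_trop n r \<mu> f" unfolding pb_trop_def pb_rank_eq by blast
  then show "y \<in> pb_trop n r \<mu> f - {inf_vec n}" using y by blast
qed

end

section \<open>Weakly monomial matrices\<close>

lemma valuation_zero: "valuation val \<Longrightarrow> val 0 = \<infinity>"
  unfolding valuation_def by simp

lemma assoc_matrix_entries:
  assumes "valuation val" "assoc_matrix val n f A" "i \<in> {1..n}" "j \<in> {1..n}"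
  shows "val (A i j) = (if fst (f i) = j then snd (f i) else \<infinity>)"
  using assms valuation_zero[OF assms(1)] unfolding assoc_matrix_def by auto

lemma assoc_map_zero_row:
  "i = 0 \<or> (\<forall>j\<in>{1..n}. M i j = 0) \<Longrightarrow> assoc_map val n M i = (0, \<infinity>)"
  unfolding assoc_map_def by auto

lemma assoc_map_nonzero_entry:
  assumes wm: "weakly_monomial n M" and "i \<in> {1..n}" "j \<in> {1..n}" "M i j \<noteq> 0"
  shows "assoc_map val n M i = (j, val (M i j))"
proof -
  have "(THE j. j \<in> {1..n} \<and> M i j \<noteq> 0) = j"
    using assms unfolding weakly_monomial_def by (intro the_equality) blast+
  then show ?thesis using assms unfolding assoc_map_def by auto
qed

lemma assoc_map_cases:
  assumes "weakly_monomial n M" "i \<in> {0..n}"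
  obtains "assoc_map val n M i = (0, \<infinity>)" "i = 0 \<or> (\<forall>j\<in>{1..n}. M i j = 0)"
  | j where "i \<in> {1..n}" "j \<in> {1..n}" "M i j \<noteq> 0" "assoc_map val n M i = (j, val (M i j))"
proof (cases "i = 0 \<or> (\<forall>j\<in>{1..n}. M i j = 0)")
  case True
  then show ?thesis using that(1) assoc_map_zero_row by blast
next
  case False
  then obtain j where "i \<in> {1..n}" "j \<in> {1..n}" "M i j \<noteq> 0" using assms(2) by auto
  then show ?thesis using that(2) assoc_map_nonzero_entry[OF assms(1)] by blast
qed

lemma assoc_map_matrix:
  assumes val: "valuation val" and wm: "weakly_monomial n M"
  shows "assoc_matrix val n (assoc_map val n M) M"
  unfolding assoc_matrix_def
proof (intro ballI conjI impI)
  fix i j assume ij: "i \<in> {1..n}" "j \<in> {1..n}"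
  then have i: "i \<in> {0..n}" by auto
  show "val (M i j) = snd (assoc_map val n M i)" if "fst (assoc_map val n M i) = j"
  proof (cases rule: assoc_map_cases[OF wm i, of val])
    case 1
    then show ?thesis using that ij by auto
  next
    case (2 j')
    then show ?thesis using that by auto
  qed
  show "M i j = 0" if "fst (assoc_map val n M i) \<noteq> j"
  proof (cases rule: assoc_map_cases[OF wm i, of val])
    case 1
    then show ?thesis using ij by auto
  next
    case (2 j')
    then have "j \<noteq> j'" using that by simp
    then show ?thesis using wm 2 ij unfolding weakly_monomial_def by blast
  qed
qed

lemma assoc_map_range:
  assumes "valuation val" "weakly_monomial n M" "i \<in> {0..n}"
  shows "fst (assoc_map val n M i) \<in> {0..n} \<and> snd (assoc_map val n M i) \<in> tropT"
proof (cases rule: assoc_map_cases[OF assms(2,3), of val])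
  case (2 j)
  then show ?thesis using assms(1) unfolding valuation_def by auto
qed (simp add: tropT_def)

lemma assoc_map_weight_finite:
  assumes "valuation val" "weakly_monomial n M" "i \<in> {0..n}" "fst (assoc_map val n M i) \<noteq> 0"
  shows "snd (assoc_map val n M i) \<noteq> \<infinity>"
proof (cases rule: assoc_map_cases[OF assms(2,3), of val])
  case 1
  then show ?thesis using assms(4) by simp
next
  case (2 j)
  then show ?thesis using assms(1) unfolding valuation_def by auto
qed

theorem proposition2p24:
  fixes val :: "'k::field \<Rightarrow> ereal" and \<mu> :: "nat set \<Rightarrow> ereal" and n r :: nat
  assumes "valuation val"
    and "valuated_matroid {1..n} r \<mu>"
  shows
    "(\<forall>f A.
        (\<forall>i\<in>{0..n}. fst (f i) \<in> {0..n} \<and> snd (f i) \<in> tropT) \<and>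
        (\<forall>i\<in>{1..n}. \<exists>k. snd (f i) = val k) \<and>
        assoc_matrix val n f A \<and>
        valuated_matroid {0..n} (pb_rank n r \<mu> f) (pullback n r \<mu> f) \<longrightarrow>
        pb_trop n r \<mu> f - {inf_vec n} = lin_image val n A r \<mu> - {inf_vec n})
     \<and>
     (\<forall>M. weakly_monomial n M \<longrightarrow>
        pb_trop n r \<mu> (assoc_map val n M) - {inf_vec n} = lin_image val n M r \<mu> - {inf_vec n})"
proof (intro conjI allI impI)
  fix f A
  assume H: "(\<forall>i\<in>{0..n}. fst (f i) \<in> {0..n} \<and> snd (f i) \<in> tropT) \<and>
        (\<forall>i\<in>{1..n}. \<exists>k. snd (f i) = val k) \<and>
        assoc_matrix val n f A \<and>
        valuated_matroid {0..n} (pb_rank n r \<mu> f) (pullback n r \<mu> f)"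
  interpret pullback_data \<mu> n r f by unfold_locales (use assms(2) H in auto)
  \<comment> \<open>The weights being valuations matters only for the existence of \<open>A\<close>; that the
    pullback is a valuated matroid is used only to get a basis of finite value.\<close>
  have "\<exists>B0. B0 \<subseteq> {0..n} \<and> card B0 = k \<and> \<nu> B0 \<noteq> \<infinity>"
    using H unfolding valuated_matroid_def pb_rank_eq by blast
  then show "pb_trop n r \<mu> f - {inf_vec n} = lin_image val n A r \<mu> - {inf_vec n}"
    unfolding lin_image_def using H assoc_matrix_entries[OF assms(1)] by (intro pb_trop_eq_image) auto
next
  fix M :: "nat \<Rightarrow> nat \<Rightarrow> 'k"
  assume wm: "weakly_monomial n M"
  interpret pullback_data \<mu> n r "assoc_map val n M"
    by unfold_locales (use assms assoc_map_range[OF assms(1) wm] in auto)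
  show "pb_trop n r \<mu> (assoc_map val n M) - {inf_vec n} = lin_image val n M r \<mu> - {inf_vec n}"
    unfolding lin_image_def
    using assoc_matrix_entries[OF assms(1) assoc_map_matrix[OF assms(1) wm]]
      pullback_has_basis assoc_map_weight_finite[OF assms(1) wm]
    by (intro pb_trop_eq_image) auto
qed

end
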